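(* Let $\mathcal H=L^2(S^1,\mathbb C^{N+1})$ and let $\mathcal H_+\subset\mathcal H$ be the subspace of boundary values of holomorphic maps $\{|z|<1\}\to\mathbb C^{N+1}$. Let $\mathbb P\subset\mathcal H$ be a closed subspace such that $z^{-1}\mathbb P\subset\mathbb P$ and $\mathbb P\oplus\mathcal H_+=\mathcal H$ (direct sum, not necessarily orthogonal). Then $\bigcap_{n\ge0}z^{-n}\mathbb P=\{0\}$.
   Context: Here $z$ denotes the coordinate function on $S^1=\{|z|=1\}$, acting on $\mathcal H$ by multiplication. *)

theory Defs
  imports "HOL-Analysis.Analysis"
begin

text \<open>Arc-length measure on the unit circle S^1 (as a measure on complex numbers,
  concentrated on the circle).\<close>
definition circ :: "complex measure" where
  "circ = distr (restrict_space lborel {0..<2*pi}) borel (\<lambda>t. cis t)"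

text \<open>Representatives of elements of H = L^2(S^1, C^(N+1)); here C^(N+1) is complex^'n
  with 'n a finite index type of cardinality N+1. Elements of H are equivalence classes
  modulo equality circ-almost everywhere.\<close>
definition L2 :: "(complex \<Rightarrow> complex^'n::finite) set" where
  "L2 = {f. f \<in> borel_measurable circ \<and> integrable circ (\<lambda>z. (norm (f z))^2)}"

definition L2_norm :: "(complex \<Rightarrow> complex^'n::finite) \<Rightarrow> real" where
  "L2_norm f = sqrt (\<integral>z. (norm (f z))^2 \<partial>circ)"

text \<open>H_+ : the Hardy space, boundary values of holomorphic maps from the unit disc,
  i.e. the elements of H whose negative Fourier coefficients vanish:
  the integral of z^(-k) f(z), k<0, i.e. of z^m f(z), m \<ge> 1, is zero.\<close>
definition Hplus :: "(complex \<Rightarrow> complex^'n::finite) set" where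
  "Hplus = {f \<in> L2. \<forall>m::nat. m \<ge> 1 \<longrightarrow> (\<integral>z. (z^m) *s f z \<partial>circ) = 0}"

text \<open>A closed (complex-linear) subspace of H, given by a set of representatives.
  Closedness in the L^2 norm also makes the set saturated under a.e. equality.\<close>
definition closed_L2_subspace :: "(complex \<Rightarrow> complex^'n::finite) set \<Rightarrow> bool" where
  "closed_L2_subspace P \<longleftrightarrow>
     P \<subseteq> L2 \<and> (\<lambda>z. 0) \<in> P \<and>
     (\<forall>f\<in>P. \<forall>g\<in>P. (\<lambda>z. f z + g z) \<in> P) \<and>
     (\<forall>f\<in>P. \<forall>c::complex. (\<lambda>z. c *s f z) \<in> P) \<and>
     (\<forall>fs f. (\<forall>k. fs k \<in> P) \<longrightarrow> f \<in> L2 \<longrightarrow>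
        (\<lambda>k. L2_norm (\<lambda>z. fs k z - f z)) \<longlonglongrightarrow> 0 \<longrightarrow> f \<in> P)"

end

theory Submission
  imports Defs "HOL-Computational_Algebra.Polynomial"
begin

definition square_integrable :: "'a measure \<Rightarrow> ('a \<Rightarrow> 'b::{banach, second_countable_topology}) \<Rightarrow> bool" where
  "square_integrable M f \<longleftrightarrow> f \<in> borel_measurable M \<and> integrable M (\<lambda>x. (norm (f x))^2)"

definition L2_seminorm :: "'a measure \<Rightarrow> ('a \<Rightarrow> 'b::{banach, second_countable_topology}) \<Rightarrow> real" where
  "L2_seminorm M f = sqrt (\<integral>x. (norm (f x))^2 \<partial>M)"

lemma square_integrable_measurable: "square_integrable M f \<Longrightarrow> f \<in> borel_measurable M"
  by (simp add: square_integrable_def)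

lemma square_integrable_integrable_square:
  "square_integrable M f \<Longrightarrow> integrable M (\<lambda>x. (norm (f x))^2)"
  by (simp add: square_integrable_def)

lemma L2_seminorm_nonneg: "L2_seminorm M f \<ge> 0"
  unfolding L2_seminorm_def by (simp add: integral_nonneg_AE)

lemma L2_seminorm_square: "(L2_seminorm M f)^2 = (\<integral>x. (norm (f x))^2 \<partial>M)"
  unfolding L2_seminorm_def by (simp add: integral_nonneg_AE)

lemma L2_seminorm_norm: "L2_seminorm M (\<lambda>x. norm (f x)) = L2_seminorm M f"
  by (simp add: L2_seminorm_def)

lemma L2_seminorm_minus_commute: "L2_seminorm M (\<lambda>x. f x - g x) = L2_seminorm M (\<lambda>x. g x - f x)"
  by (simp add: L2_seminorm_def norm_minus_commute)

lemma L2_seminorm_cong_AE: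
  assumes "AE x in M. f x = g x" and [measurable]: "f \<in> borel_measurable M" "g \<in> borel_measurable M"
  shows "L2_seminorm M f = L2_seminorm M g"
  unfolding L2_seminorm_def using assms(1) by (intro arg_cong[where f=sqrt] integral_cong_AE) auto

lemma L2_seminorm_eq_0_iff:
  assumes "square_integrable M f"
  shows "L2_seminorm M f = 0 \<longleftrightarrow> (AE x in M. f x = 0)"
proof -
  have "L2_seminorm M f = 0 \<longleftrightarrow> (\<integral>x. (norm (f x))^2 \<partial>M) = 0"
    by (simp add: L2_seminorm_def integral_nonneg_AE)
  also have "\<dots> \<longleftrightarrow> (AE x in M. (norm (f x))^2 = 0)"
    using assms by (subst integral_nonneg_eq_0_iff_AE) (auto simp: square_integrable_def)
  finally show ?thesis by simp
qed

lemma square_integrable_bound: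
  assumes "square_integrable M g" and [measurable]: "f \<in> borel_measurable M"
    and "AE x in M. norm (f x) \<le> norm (g x)"
  shows "square_integrable M f"
  unfolding square_integrable_def
proof
  show "integrable M (\<lambda>x. (norm (f x))^2)"
    by (rule Bochner_Integration.integrable_bound[OF square_integrable_integrable_square[OF assms(1)]])
       (use assms(3) in \<open>auto intro: power_mono\<close>)
qed simp

lemma (in finite_measure) square_integrable_bounded:
  assumes [measurable]: "f \<in> borel_measurable M" and "AE x in M. norm (f x) \<le> B"
  shows "square_integrable M f"
  by (rule square_integrable_bound[where g="\<lambda>_. B"])
     (use assms in \<open>auto simp: square_integrable_def\<close>)

lemma square_integrable_zero: "square_integrable M (\<lambda>x. 0)"
  by (simp add: square_integrable_def)

lemma square_integrable_scaleR: "square_integrable M f \<Longrightarrow> square_integrable M (\<lambda>x. c *\<^sub>R f x)"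
  by (auto simp: square_integrable_def power_mult_distrib)

lemma square_integrable_norm: "square_integrable M f \<Longrightarrow> square_integrable M (\<lambda>x. norm (f x))"
  by (auto simp: square_integrable_def)

lemma square_integrable_add:
  assumes f: "square_integrable M f" and g: "square_integrable M g"
  shows "square_integrable M (\<lambda>x. f x + g x)"
proof -
  have [measurable]: "f \<in> borel_measurable M" "g \<in> borel_measurable M"
    using f g by (auto simp: square_integrable_def)
  have i: "integrable M (\<lambda>x. 2 * (norm (f x))^2 + 2 * (norm (g x))^2)"
    using f g by (auto simp: square_integrable_def)
  have "(norm (f x + g x))^2 \<le> 2 * (norm (f x))^2 + 2 * (norm (g x))^2" for x
  proof -
    have "(norm (f x + g x))^2 \<le> (norm (f x) + norm (g x))^2"
      by (intro power_mono norm_triangle_ineq) simp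
    also have "\<dots> \<le> 2 * (norm (f x))^2 + 2 * (norm (g x))^2"
      using sum_squares_ge_zero[of "norm (f x) - norm (g x)" 0]
      by (simp add: power2_eq_square algebra_simps)
    finally show ?thesis .
  qed
  then have "integrable M (\<lambda>x. (norm (f x + g x))^2)"
    by (intro Bochner_Integration.integrable_bound[OF i]) auto
  then show ?thesis by (simp add: square_integrable_def)
qed

lemma square_integrable_diff:
  "square_integrable M f \<Longrightarrow> square_integrable M g \<Longrightarrow> square_integrable M (\<lambda>x. f x - g x)"
  using square_integrable_add[of M f "\<lambda>x. (-1) *\<^sub>R g x"] square_integrable_scaleR[of M g "-1"] by simp

lemma square_integrable_sum:
  "(\<And>i. i \<in> I \<Longrightarrow> square_integrable M (f i)) \<Longrightarrow> square_integrable M (\<lambda>x. \<Sum>i\<in>I. f i x)"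
  by (induction I rule: infinite_finite_induct) (auto simp: square_integrable_zero intro!: square_integrable_add)

lemma nn_integral_square_norm_eq_L2_seminorm:
  assumes "square_integrable M f"
  shows "(\<integral>\<^sup>+x. ennreal (norm (f x)) ^ 2 \<partial>M) = ennreal ((L2_seminorm M f)^2)"
proof -
  have "(\<integral>\<^sup>+x. ennreal (norm (f x)) ^ 2 \<partial>M) = (\<integral>\<^sup>+x. ennreal ((norm (f x))^2) \<partial>M)"
    by (simp add: ennreal_power)
  also have "\<dots> = ennreal (\<integral>x. (norm (f x))^2 \<partial>M)"
    using assms by (intro nn_integral_eq_integral) (auto simp: square_integrable_def)
  finally show ?thesis by (simp add: L2_seminorm_square)
qed

lemma L2_seminorm_Cauchy_Schwarz:
  assumes f: "square_integrable M f" and g: "square_integrable M g"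
  shows "integrable M (\<lambda>x. norm (f x) * norm (g x))"
    and "(\<integral>x. norm (f x) * norm (g x) \<partial>M) \<le> L2_seminorm M f * L2_seminorm M g"
proof -
  have [measurable]: "f \<in> borel_measurable M" "g \<in> borel_measurable M"
    using f g by (auto simp: square_integrable_def)
  have f2: "integrable M (\<lambda>x. (norm (f x))^2)" and g2: "integrable M (\<lambda>x. (norm (g x))^2)"
    using f g by (auto simp: square_integrable_def)
  have "norm (f x) * norm (g x) \<le> (norm (f x))^2 + (norm (g x))^2" for x
  proof -
    have "2 * (norm (f x) * norm (g x)) \<le> (norm (f x))^2 + (norm (g x))^2"
      using sum_squares_ge_zero[of "norm (f x) - norm (g x)" 0] by (simp add: power2_eq_square algebra_simps)
    moreover have "norm (f x) * norm (g x) \<ge> 0" by simp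
    ultimately show ?thesis by linarith
  qed
  then show fg: "integrable M (\<lambda>x. norm (f x) * norm (g x))"
    by (intro Bochner_Integration.integrable_bound[OF Bochner_Integration.integrable_add[OF f2 g2]]) auto
  have "(\<integral>\<^sup>+x. ennreal (norm (f x)) * ennreal (norm (g x)) \<partial>M) = (\<integral>\<^sup>+x. ennreal (norm (f x) * norm (g x)) \<partial>M)"
    by (simp add: ennreal_mult')
  also have "\<dots> = ennreal (\<integral>x. norm (f x) * norm (g x) \<partial>M)"
    by (rule nn_integral_eq_integral[OF fg]) simp
  finally have "ennreal (\<integral>x. norm (f x) * norm (g x) \<partial>M) ^ 2
      \<le> (\<integral>\<^sup>+x. ennreal (norm (f x)) ^ 2 \<partial>M) * (\<integral>\<^sup>+x. ennreal (norm (g x)) ^ 2 \<partial>M)"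
    using Cauchy_Schwarz_nn_integral[of "\<lambda>x. ennreal (norm (f x))" M "\<lambda>x. ennreal (norm (g x))"] by simp
  also have "\<dots> = ennreal ((L2_seminorm M f * L2_seminorm M g)^2)"
    using f g by (simp add: nn_integral_square_norm_eq_L2_seminorm ennreal_mult' power_mult_distrib)
  finally have "(\<integral>x. norm (f x) * norm (g x) \<partial>M)^2 \<le> (L2_seminorm M f * L2_seminorm M g)^2"
    by (subst (asm) ennreal_power) (simp_all add: integral_nonneg_AE)
  then show "(\<integral>x. norm (f x) * norm (g x) \<partial>M) \<le> L2_seminorm M f * L2_seminorm M g"
    by (rule power2_le_imp_le) (simp add: L2_seminorm_nonneg)
qed

lemma L2_seminorm_triangle:
  assumes f: "square_integrable M f" and g: "square_integrable M g"
  shows "L2_seminorm M (\<lambda>x. f x + g x) \<le> L2_seminorm M f + L2_seminorm M g"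
proof -
  have [measurable]: "f \<in> borel_measurable M" "g \<in> borel_measurable M"
    using f g by (auto simp: square_integrable_def)
  have f2: "integrable M (\<lambda>x. (norm (f x))^2)" and g2: "integrable M (\<lambda>x. (norm (g x))^2)"
    and fg2: "integrable M (\<lambda>x. (norm (f x + g x))^2)"
    using f g square_integrable_add[OF f g] by (auto simp: square_integrable_def)
  note fg = L2_seminorm_Cauchy_Schwarz[OF f g]
  have "(L2_seminorm M (\<lambda>x. f x + g x))^2
      \<le> (\<integral>x. (norm (f x))^2 + 2 * (norm (f x) * norm (g x)) + (norm (g x))^2 \<partial>M)"
    unfolding L2_seminorm_square
  proof (rule integral_mono[OF fg2])
    show "integrable M (\<lambda>x. (norm (f x))^2 + 2 * (norm (f x) * norm (g x)) + (norm (g x))^2)"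
      using f2 g2 fg(1) by auto
    show "(norm (f x + g x))^2 \<le> (norm (f x))^2 + 2 * (norm (f x) * norm (g x)) + (norm (g x))^2" for x
      using power_mono[OF norm_triangle_ineq[of "f x" "g x"], of 2] by (simp add: power2_eq_square algebra_simps)
  qed
  also have "\<dots> = (L2_seminorm M f)^2 + 2 * (\<integral>x. norm (f x) * norm (g x) \<partial>M) + (L2_seminorm M g)^2"
    using f2 g2 fg(1) by (simp add: L2_seminorm_square)
  also have "\<dots> \<le> (L2_seminorm M f + L2_seminorm M g)^2"
    using fg(2) by (simp add: power2_eq_square algebra_simps)
  finally show ?thesis
    by (rule power2_le_imp_le) (simp add: L2_seminorm_nonneg add_nonneg_nonneg)
qed

lemma L2_seminorm_triangle_diff:
  assumes "square_integrable M f" "square_integrable M g" "square_integrable M h"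
  shows "L2_seminorm M (\<lambda>x. f x - h x) \<le> L2_seminorm M (\<lambda>x. f x - g x) + L2_seminorm M (\<lambda>x. g x - h x)"
  using L2_seminorm_triangle[of M "\<lambda>x. f x - g x" "\<lambda>x. g x - h x"] assms by (simp add: square_integrable_diff)

lemma L2_seminorm_sum_le:
  "(\<And>i. i \<in> I \<Longrightarrow> square_integrable M (f i)) \<Longrightarrow>
    L2_seminorm M (\<lambda>x. \<Sum>i\<in>I. f i x) \<le> (\<Sum>i\<in>I. L2_seminorm M (f i))"
proof (induction I rule: infinite_finite_induct)
  case (insert a A)
  have "L2_seminorm M (\<lambda>x. \<Sum>i\<in>insert a A. f i x) = L2_seminorm M (\<lambda>x. f a x + (\<Sum>i\<in>A. f i x))"
    using insert by simp
  also have "\<dots> \<le> L2_seminorm M (f a) + L2_seminorm M (\<lambda>x. \<Sum>i\<in>A. f i x)"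
    using insert by (intro L2_seminorm_triangle square_integrable_sum) auto
  also have "\<dots> \<le> L2_seminorm M (f a) + (\<Sum>i\<in>A. L2_seminorm M (f i))"
    using insert by simp
  finally show ?case using insert by simp
qed (simp_all add: L2_seminorm_def)

lemma L2_seminorm_dominated_convergence:
  assumes s: "\<And>i. square_integrable M (s i)" and g: "square_integrable M g" and w: "integrable M w"
    and lim: "AE x in M. (\<lambda>i. s i x) \<longlonglongrightarrow> g x"
    and bound: "\<And>i. AE x in M. (norm (s i x - g x))^2 \<le> w x"
  shows "(\<lambda>i. L2_seminorm M (\<lambda>x. s i x - g x)) \<longlonglongrightarrow> 0"
proof -
  have [measurable]: "g \<in> borel_measurable M" "\<And>i. s i \<in> borel_measurable M"
    using s g by (auto simp: square_integrable_def)
  have "(\<lambda>i. \<integral>x. (norm (s i x - g x))^2 \<partial>M) \<longlonglongrightarrow> (\<integral>x. 0 \<partial>M)"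
  proof (rule integral_dominated_convergence[where w=w])
    show "AE x in M. (\<lambda>i. (norm (s i x - g x))^2) \<longlonglongrightarrow> 0"
      using lim
    proof eventually_elim
      case (elim x)
      then have "(\<lambda>i. norm (s i x - g x)) \<longlonglongrightarrow> 0"
        using LIM_zero tendsto_norm_zero by blast
      then show ?case using tendsto_power[of _ 0 _ 2] by fastforce
    qed
    show "AE x in M. norm ((norm (s i x - g x))^2) \<le> w x" for i
      using bound[of i] by auto
  qed (use w in auto)
  then have "(\<lambda>i. sqrt (\<integral>x. (norm (s i x - g x))^2 \<partial>M)) \<longlonglongrightarrow> sqrt 0"
    by (intro tendsto_real_sqrt) simp
  then show ?thesis by (simp add: L2_seminorm_def)
qed

lemma nn_integral_square_suminf_le:
  fixes a :: "nat \<Rightarrow> 'a \<Rightarrow> real"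
  assumes [measurable]: "\<And>j. a j \<in> borel_measurable M" and nonneg: "\<And>j x. a j x \<ge> 0"
    and bound: "\<And>m. (\<integral>\<^sup>+x. ennreal ((\<Sum>j<m. a j x)^2) \<partial>M) \<le> B"
    and B: "B < \<infinity>"
  shows "AE x in M. summable (\<lambda>j. a j x)"
    and "(\<integral>\<^sup>+x. ennreal ((\<Sum>j. a j x)^2) \<partial>M) \<le> B"
proof -
  define G where "G m x = (\<Sum>j<m. a j x)" for m x
  have G_nonneg: "G m x \<ge> 0" for m x
    unfolding G_def by (simp add: sum_nonneg nonneg)
  have G_mono: "G m x \<le> G (Suc m) x" for m x
    unfolding G_def by (simp add: nonneg)
  define Q where "Q x = (SUP m. ennreal ((G m x)^2))" for x
  have [measurable]: "Q \<in> borel_measurable M"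
    unfolding Q_def G_def by measurable
  have "incseq (\<lambda>m x. ennreal ((G m x)^2))"
    by (intro incseq_SucI le_funI ennreal_leI power_mono G_mono G_nonneg)
  then have "(\<integral>\<^sup>+x. Q x \<partial>M) = (SUP m. \<integral>\<^sup>+x. ennreal ((G m x)^2) \<partial>M)"
    unfolding Q_def by (rule nn_integral_monotone_convergence_SUP) (simp add: G_def)
  also have "\<dots> \<le> B"
    by (rule SUP_least) (simp add: G_def bound)
  finally have Q_le: "(\<integral>\<^sup>+x. Q x \<partial>M) \<le> B" .
  have Q_summable: "summable (\<lambda>j. a j x) \<and> ennreal ((\<Sum>j. a j x)^2) = Q x" if "Q x \<noteq> \<infinity>" for x
  proof
    have bound: "G m x \<le> sqrt (enn2real (Q x))" for m
    proof -
      have "ennreal ((G m x)^2) \<le> Q x" unfolding Q_def by (rule SUP_upper) auto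
      then have "enn2real (ennreal ((G m x)^2)) \<le> enn2real (Q x)"
        using that by (intro enn2real_mono) (auto simp: top.not_eq_extremum)
      then show ?thesis using G_nonneg by (simp add: real_le_rsqrt)
    qed
    show sum: "summable (\<lambda>j. a j x)"
      by (rule summableI_nonneg_bounded[where x="sqrt (enn2real (Q x))"]) (use bound nonneg in \<open>auto simp: G_def\<close>)
    have "(\<lambda>m. ennreal ((G m x)^2)) \<longlonglongrightarrow> ennreal ((\<Sum>j. a j x)^2)"
      unfolding G_def by (intro tendsto_ennrealI tendsto_power summable_LIMSEQ sum)
    moreover have "(\<lambda>m. ennreal ((G m x)^2)) \<longlonglongrightarrow> Q x"
      unfolding Q_def by (intro LIMSEQ_SUP incseq_SucI ennreal_leI power_mono G_mono G_nonneg)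
    ultimately show "ennreal ((\<Sum>j. a j x)^2) = Q x"
      by (rule LIMSEQ_unique)
  qed
  have AE_Q: "AE x in M. Q x \<noteq> \<infinity>"
    using Q_le B by (intro nn_integral_PInf_AE) auto
  then show "AE x in M. summable (\<lambda>j. a j x)"
    by eventually_elim (use Q_summable in blast)
  have "AE x in M. ennreal ((\<Sum>j. a j x)^2) = Q x"
    using AE_Q by eventually_elim (use Q_summable in blast)
  then show "(\<integral>\<^sup>+x. ennreal ((\<Sum>j. a j x)^2) \<partial>M) \<le> B"
    using Q_le by (simp add: nn_integral_cong_AE)
qed

lemma square_integrable_suminf_norm:
  fixes d :: "nat \<Rightarrow> 'a \<Rightarrow> 'b::{banach, second_countable_topology}"
  assumes d: "\<And>j. square_integrable M (d j)" and summable: "summable (\<lambda>j. L2_seminorm M (d j))"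
  shows "AE x in M. summable (\<lambda>j. norm (d j x))"
    and "square_integrable M (\<lambda>x. \<Sum>j. norm (d j x))"
proof -
  have [measurable]: "d j \<in> borel_measurable M" for j
    using d by (rule square_integrable_measurable)
  have "(\<integral>\<^sup>+x. ennreal ((\<Sum>j<m. norm (d j x))^2) \<partial>M) \<le> ennreal ((\<Sum>j. L2_seminorm M (d j))^2)" for m
  proof -
    have sq: "square_integrable M (\<lambda>x. \<Sum>j<m. norm (d j x))"
      by (intro square_integrable_sum square_integrable_norm d)
    have "L2_seminorm M (\<lambda>x. \<Sum>j<m. norm (d j x)) \<le> (\<Sum>j<m. L2_seminorm M (\<lambda>x. norm (d j x)))"
      by (intro L2_seminorm_sum_le square_integrable_norm d)
    also have "\<dots> \<le> (\<Sum>j. L2_seminorm M (d j))"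
      unfolding L2_seminorm_norm by (intro sum_le_suminf summable) (auto simp: L2_seminorm_nonneg)
    finally have "(L2_seminorm M (\<lambda>x. \<Sum>j<m. norm (d j x)))^2 \<le> (\<Sum>j. L2_seminorm M (d j))^2"
      by (intro power_mono L2_seminorm_nonneg)
    then show ?thesis
      using nn_integral_square_norm_eq_L2_seminorm[OF sq] by (simp add: ennreal_power sum_nonneg ennreal_leI)
  qed
  note suminf = nn_integral_square_suminf_le[where a="\<lambda>j x. norm (d j x)", OF _ _ this]
  show "AE x in M. summable (\<lambda>j. norm (d j x))"
    using suminf by simp
  have "integrable M (\<lambda>x. (\<Sum>j. norm (d j x))^2)"
  proof (rule integrableI_nonneg)
    show "(\<integral>\<^sup>+x. ennreal ((\<Sum>j. norm (d j x))^2) \<partial>M) < \<infinity>"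
      using suminf(2) by (simp add: order.strict_trans1)
  qed auto
  then show "square_integrable M (\<lambda>x. \<Sum>j. norm (d j x))"
    by (simp add: square_integrable_def suminf_nonneg)
qed

lemma tail_norm_le_suminf_norm:
  fixes a :: "nat \<Rightarrow> 'b::banach"
  assumes "summable (\<lambda>j. norm (a j))"
  shows "norm ((\<Sum>j<m. a j) - (\<Sum>j. a j)) \<le> (\<Sum>j. norm (a j))"
proof -
  have tail: "summable (\<lambda>j. norm (a (j + m)))"
    using assms by (rule summable_ignore_initial_segment)
  have "(\<Sum>j<m. a j) - (\<Sum>j. a j) = - (\<Sum>j. a (j + m))"
    using suminf_split_initial_segment[OF summable_norm_cancel[OF assms], of m] by simp
  then have "norm ((\<Sum>j<m. a j) - (\<Sum>j. a j)) \<le> (\<Sum>j. norm (a (j + m)))"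
    using summable_norm[OF tail] by simp
  also have "\<dots> \<le> (\<Sum>j. norm (a j))"
    using suminf_split_initial_segment[OF assms, of m] by (simp add: sum_nonneg)
  finally show ?thesis .
qed

theorem square_integrable_series_converges:
  fixes d :: "nat \<Rightarrow> 'a \<Rightarrow> 'b::{banach, second_countable_topology}"
  assumes d: "\<And>j. square_integrable M (d j)" and summable: "summable (\<lambda>j. L2_seminorm M (d j))"
  shows "square_integrable M (\<lambda>x. \<Sum>j. d j x)"
    and "(\<lambda>m. L2_seminorm M (\<lambda>x. (\<Sum>j<m. d j x) - (\<Sum>j. d j x))) \<longlonglongrightarrow> 0"
proof -
  have [measurable]: "d j \<in> borel_measurable M" for j
    using d by (rule square_integrable_measurable)
  define W where "W x = (\<Sum>j. norm (d j x))" for x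
  have W: "square_integrable M W" and AE_summable: "AE x in M. summable (\<lambda>j. norm (d j x))"
    unfolding W_def using square_integrable_suminf_norm[OF d summable] by auto
  show S: "square_integrable M (\<lambda>x. \<Sum>j. d j x)"
  proof (rule square_integrable_bound[OF W])
    show "AE x in M. norm (\<Sum>j. d j x) \<le> norm (W x)"
      using AE_summable
    proof eventually_elim
      case (elim x)
      have "norm (\<Sum>j. d j x) \<le> W x"
        unfolding W_def using elim by (rule summable_norm)
      then show ?case by simp
    qed
  qed measurable
  show "(\<lambda>m. L2_seminorm M (\<lambda>x. (\<Sum>j<m. d j x) - (\<Sum>j. d j x))) \<longlonglongrightarrow> 0"
  proof (rule L2_seminorm_dominated_convergence[OF _ S])
    show "square_integrable M (\<lambda>x. \<Sum>j<m. d j x)" for m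
      by (intro square_integrable_sum d)
    show "integrable M (\<lambda>x. (W x)^2)"
      using W by (simp add: square_integrable_def W_def suminf_nonneg)
    show "AE x in M. (\<lambda>m. \<Sum>j<m. d j x) \<longlonglongrightarrow> (\<Sum>j. d j x)"
      using AE_summable by eventually_elim (rule summable_LIMSEQ, rule summable_norm_cancel)
    show "AE x in M. (norm ((\<Sum>j<m. d j x) - (\<Sum>j. d j x)))^2 \<le> (W x)^2" for m
      using AE_summable
    proof eventually_elim
      case (elim x)
      show ?case
        unfolding W_def by (intro power_mono tail_norm_le_suminf_norm elim) simp
    qed
  qed
qed

lemma space_circ [simp]: "space circ = UNIV"
  by (simp add: circ_def)

lemma sets_circ [simp, measurable_cong]: "sets circ = sets borel"
  by (simp add: circ_def)

lemma measurable_circ_iff [simp]: "measurable circ N = measurable borel N"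
  by (simp add: circ_def)

lemma cis_measurable [measurable]: "cis \<in> borel_measurable (restrict_space lborel S)"
  by (rule measurable_restrict_space1) (simp add: borel_measurable_continuous_onI continuous_on_cis)

lemma emeasure_circ_UNIV: "emeasure circ UNIV = ennreal (2*pi)"
proof -
  have "emeasure circ UNIV = emeasure (restrict_space lborel {0..<2*pi}) {0..<2*pi}"
    unfolding circ_def by (subst emeasure_distr) (auto simp: space_restrict_space)
  also have "\<dots> = ennreal (2*pi)"
    by (subst emeasure_restrict_space) auto
  finally show ?thesis .
qed

lemma measure_circ_UNIV: "measure circ UNIV = 2*pi"
  by (simp add: measure_def emeasure_circ_UNIV)

interpretation circ: finite_measure circ
  by (rule finite_measureI) (simp add: emeasure_circ_UNIV)

lemma AE_circ_norm: "AE z in circ. norm z = 1"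
  unfolding circ_def by (subst AE_distr_iff) auto

lemma AE_circ_norm_power: "AE z in circ. norm (z^m) = 1"
  using AE_circ_norm by eventually_elim (simp add: norm_power)

lemma integral_circ:
  fixes f :: "complex \<Rightarrow> 'b::{banach, second_countable_topology}"
  assumes [measurable]: "f \<in> borel_measurable borel"
  shows "(\<integral>z. f z \<partial>circ) = (LBINT t=0..2*pi. f (cis t))"
proof -
  have "(\<integral>z. f z \<partial>circ) = (LBINT t:{0..<2*pi}. f (cis t))"
    unfolding circ_def
    by (subst integral_distr) (auto simp: integral_restrict_space set_lebesgue_integral_def)
  also have "\<dots> = (LBINT t=0..2*pi. f (cis t))"
    using interval_integral_Ico[of 0 "2*pi" "\<lambda>t. f (cis t)"] by (simp add: zero_ereal_def)
  finally show ?thesis .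
qed

lemma integral_circ_power:
  assumes "k \<ge> 1"
  shows "(\<integral>z. z^k \<partial>circ) = (0::complex)"
proof -
  define r where "r = real k"
  have r: "complex_of_real r \<noteq> 0"
    using assms by (simp add: r_def)
  have deriv: "((\<lambda>t. cis (r * t) / (\<i> * r)) has_vector_derivative cis (r * t)) (at t within S)" for t S
  proof -
    have "((\<lambda>t. cis (r * t)) has_derivative (\<lambda>x. (r * x) *\<^sub>R (\<i> * cis (r * t)))) (at t within S)"
      by (intro has_derivative_cis derivative_intros)
    then have "((\<lambda>t. cis (r * t) / (\<i> * r)) has_derivative (\<lambda>x. ((r * x) *\<^sub>R (\<i> * cis (r * t))) / (\<i> * r))) (at t within S)"
      unfolding divide_inverse by (rule has_derivative_mult_left)
    moreover have "(\<lambda>x. ((r * x) *\<^sub>R (\<i> * cis (r * t))) / (\<i> * r)) = (\<lambda>x. x *\<^sub>R cis (r * t))"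
      using r by (auto simp: scaleR_conv_of_real field_simps)
    ultimately show ?thesis
      by (simp add: has_vector_derivative_def)
  qed
  have "(\<integral>z. z^k \<partial>circ) = (LBINT t=0..2*pi. cis (r * t))"
    by (simp add: integral_circ Complex.DeMoivre r_def)
  also have "\<dots> = cis (r * (2*pi)) / (\<i> * r) - cis (r * 0) / (\<i> * r)"
    using interval_integral_FTC_finite[OF _ deriv, of 0 "2*pi"]
    by (simp add: zero_ereal_def continuous_intros)
  also have "\<dots> = 0"
    using Complex.DeMoivre[of "2*pi" k] by (simp add: r_def)
  finally show ?thesis .
qed

lemma norm_vector_smult: "norm (c *s (x::complex^'n::finite)) = norm c * norm x"
  by (simp add: norm_vec_def vector_scalar_mult_def norm_mult L2_set_right_distrib)

lemma measurable_vector_smult [measurable]: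
  fixes f :: "'a \<Rightarrow> complex" and g :: "'a \<Rightarrow> complex^'n::finite"
  assumes "f \<in> borel_measurable M" "g \<in> borel_measurable M"
  shows "(\<lambda>x. f x *s g x) \<in> borel_measurable M"
proof -
  have "continuous_on UNIV (\<lambda>p::complex \<times> (complex^'n). fst p *s snd p)"
    unfolding vector_scalar_mult_def by (intro continuous_on_vec_lambda continuous_intros)
  then show ?thesis
    using borel_measurable_continuous_Pair[OF assms, of "\<lambda>a b. a *s b"] by simp
qed

lemma bounded_linear_vector_smult_left: "bounded_linear (\<lambda>a::complex. a *s (v::complex^'n::finite))"
  by (rule bounded_linear_intro[where K="norm v"])
     (auto simp: vector_sadd_rdistrib vec_eq_iff norm_vector_smult)

lemma bounded_linear_vector_smult_right: "bounded_linear (\<lambda>x::complex^'n::finite. c *s x)"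
  by (rule bounded_linear_intro[where K="norm c"])
     (auto simp: vector_add_ldistrib vec_eq_iff scaleR_conv_of_real norm_vector_smult)

lemma L2_iff_square_integrable: "f \<in> L2 \<longleftrightarrow> square_integrable circ f"
  by (simp add: L2_def square_integrable_def)

lemma L2_norm_eq_L2_seminorm: "L2_norm f = L2_seminorm circ f"
  by (simp add: L2_norm_def L2_seminorm_def)

lemma L2_measurable: "f \<in> L2 \<Longrightarrow> f \<in> borel_measurable borel"
  by (simp add: L2_def)

lemma L2_zero: "(\<lambda>z. 0) \<in> L2"
  by (simp add: L2_iff_square_integrable square_integrable_zero)

lemma L2_add: "f \<in> L2 \<Longrightarrow> g \<in> L2 \<Longrightarrow> (\<lambda>z. f z + g z) \<in> L2"
  by (simp add: L2_iff_square_integrable square_integrable_add)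

lemma L2_diff: "f \<in> L2 \<Longrightarrow> g \<in> L2 \<Longrightarrow> (\<lambda>z. f z - g z) \<in> L2"
  by (simp add: L2_iff_square_integrable square_integrable_diff)

lemma L2_bounded:
  "f \<in> borel_measurable borel \<Longrightarrow> AE z in circ. norm (f z) \<le> B \<Longrightarrow> f \<in> L2"
  unfolding L2_iff_square_integrable by (rule circ.square_integrable_bounded) auto

lemma L2_continuous: "continuous_on UNIV f \<Longrightarrow> f \<in> L2"
proof -
  assume cont: "continuous_on UNIV f"
  have "compact (f ` sphere 0 1)"
    by (intro compact_continuous_image continuous_on_subset[OF cont]) auto
  then have "bounded (f ` sphere 0 1)"
    by (rule compact_imp_bounded)
  then obtain B where B: "\<forall>y \<in> f ` sphere 0 1. norm y \<le> B"
    unfolding bounded_iff by blast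
  have "AE z in circ. norm (f z) \<le> B"
    using AE_circ_norm by eventually_elim (use B in auto)
  then show ?thesis
    using cont by (intro L2_bounded borel_measurable_continuous_onI)
qed

lemma L2_mult_bounded:
  fixes f :: "complex \<Rightarrow> complex^'n::finite"
  assumes f: "f \<in> L2" and [measurable]: "w \<in> borel_measurable borel"
    and w: "AE z in circ. norm (w z) \<le> B"
  shows "(\<lambda>z. w z *s f z) \<in> L2"
  unfolding L2_iff_square_integrable
proof (rule square_integrable_bound)
  have [measurable]: "f \<in> borel_measurable borel"
    using f by (rule L2_measurable)
  show "square_integrable circ (\<lambda>z. B *\<^sub>R f z)"
    using f by (simp add: L2_iff_square_integrable square_integrable_scaleR)
  show "AE z in circ. norm (w z *s f z) \<le> norm (B *\<^sub>R f z)"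
    using w by eventually_elim (auto simp: norm_vector_smult intro: mult_right_mono)
  show "(\<lambda>z. w z *s f z) \<in> borel_measurable circ"
    unfolding measurable_circ_iff by measurable
qed

lemma L2_smult: "f \<in> L2 \<Longrightarrow> (\<lambda>z. c *s f z) \<in> L2"
  using L2_mult_bounded[of f "\<lambda>z. c" "norm c"] by simp

lemma L2_mult_power: "f \<in> L2 \<Longrightarrow> (\<lambda>z. z^m *s f z) \<in> L2"
  using AE_circ_norm_power[of m] by (intro L2_mult_bounded[where B=1]) auto

lemma L2_integrable:
  assumes "f \<in> L2"
  shows "integrable circ f"
proof -
  have [measurable]: "f \<in> borel_measurable borel"
    using assms by (rule L2_measurable)
  have "integrable circ (\<lambda>z. norm (f z))"
    by (rule circ.square_integrable_imp_integrable) (use assms in \<open>auto simp: L2_def\<close>)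
  then show ?thesis
    using integrable_norm_iff[of f circ] by simp
qed

lemma L2_norm_nonneg: "L2_norm f \<ge> 0"
  by (simp add: L2_norm_eq_L2_seminorm L2_seminorm_nonneg)

lemma L2_norm_zero: "L2_norm (\<lambda>z. 0) = 0"
  by (simp add: L2_norm_def)

lemma L2_norm_minus_commute: "L2_norm (\<lambda>z. f z - g z) = L2_norm (\<lambda>z. g z - f z)"
  unfolding L2_norm_eq_L2_seminorm by (rule L2_seminorm_minus_commute)

lemma L2_norm_mult_unimodular:
  fixes f :: "complex \<Rightarrow> complex^'n::finite"
  assumes "AE z in circ. norm (w z) = 1"
    and [measurable]: "w \<in> borel_measurable borel" "f \<in> borel_measurable borel"
  shows "L2_norm (\<lambda>z. w z *s f z) = L2_norm f"
  unfolding L2_norm_def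
  by (rule arg_cong[where f=sqrt], rule integral_cong_AE) (use assms in \<open>auto simp: norm_vector_smult\<close>)

lemma L2_norm_smult: "L2_norm (\<lambda>z. c *s f z) = norm c * L2_norm f"
  by (simp add: L2_norm_def norm_vector_smult power_mult_distrib real_sqrt_mult)

lemma L2_norm_triangle: "f \<in> L2 \<Longrightarrow> g \<in> L2 \<Longrightarrow> L2_norm (\<lambda>z. f z + g z) \<le> L2_norm f + L2_norm g"
  by (simp add: L2_norm_eq_L2_seminorm L2_iff_square_integrable L2_seminorm_triangle)

lemma L2_norm_triangle_diff:
  "f \<in> L2 \<Longrightarrow> g \<in> L2 \<Longrightarrow> h \<in> L2 \<Longrightarrow>
    L2_norm (\<lambda>z. f z - h z) \<le> L2_norm (\<lambda>z. f z - g z) + L2_norm (\<lambda>z. g z - h z)"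
  by (simp add: L2_norm_eq_L2_seminorm L2_iff_square_integrable L2_seminorm_triangle_diff)

lemma L2_norm_diff_le: "f \<in> L2 \<Longrightarrow> g \<in> L2 \<Longrightarrow> L2_norm (\<lambda>z. f z - g z) \<le> L2_norm f + L2_norm g"
  using L2_norm_triangle_diff[of f "\<lambda>z. 0" g] L2_norm_minus_commute[of "\<lambda>z. 0" g] by (simp add: L2_zero)

lemma L2_norm_sum_le:
  "(\<And>i. i \<in> I \<Longrightarrow> f i \<in> L2) \<Longrightarrow> L2_norm (\<lambda>z. \<Sum>i\<in>I. f i z) \<le> (\<Sum>i\<in>I. L2_norm (f i))"
  unfolding L2_norm_eq_L2_seminorm by (rule L2_seminorm_sum_le) (simp add: L2_iff_square_integrable)

lemma L2_norm_eq_0_iff: "f \<in> L2 \<Longrightarrow> L2_norm f = 0 \<longleftrightarrow> (AE z in circ. f z = 0)"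
  by (simp add: L2_norm_eq_L2_seminorm L2_iff_square_integrable L2_seminorm_eq_0_iff)

lemma L2_norm_cong_AE: "AE z in circ. f z = g z \<Longrightarrow> f \<in> L2 \<Longrightarrow> g \<in> L2 \<Longrightarrow> L2_norm f = L2_norm g"
  unfolding L2_norm_eq_L2_seminorm by (rule L2_seminorm_cong_AE) (auto simp: L2_def)

lemma L2_norm_le_sup:
  assumes [measurable]: "f \<in> borel_measurable borel" and "AE z in circ. norm (f z) \<le> B" "B \<ge> 0"
  shows "L2_norm f \<le> sqrt (2*pi) * B"
proof -
  have "(\<integral>z. (norm (f z))^2 \<partial>circ) \<le> (\<integral>z. B^2 \<partial>circ)"
  proof (rule integral_mono_AE)
    show "integrable circ (\<lambda>z. (norm (f z))^2)"
      using L2_bounded[OF assms(1,2)] by (simp add: L2_def)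
    show "AE z in circ. (norm (f z))^2 \<le> B^2"
      using assms(2) by eventually_elim (auto intro: power_mono)
  qed auto
  then have "L2_norm f \<le> sqrt (2*pi * B^2)"
    by (simp add: L2_norm_def measure_circ_UNIV)
  also have "\<dots> = sqrt (2*pi) * B"
    using assms(3) by (simp add: real_sqrt_mult)
  finally show ?thesis .
qed

lemma integral_norm_le_L2_norm: "f \<in> L2 \<Longrightarrow> (\<integral>z. norm (f z) \<partial>circ) \<le> sqrt (2*pi) * L2_norm f"
  using L2_seminorm_Cauchy_Schwarz(2)[of circ f "\<lambda>z. 1::real"]
  by (simp add: L2_iff_square_integrable L2_norm_eq_L2_seminorm square_integrable_def
      L2_seminorm_def measure_circ_UNIV mult.commute)

lemma L2_series_converges:
  assumes "\<And>j. d j \<in> L2" "summable (\<lambda>j. L2_norm (d j))"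
  shows "(\<lambda>z. \<Sum>j. d j z) \<in> L2"
    and "(\<lambda>m. L2_norm (\<lambda>z. (\<Sum>j<m. d j z) - (\<Sum>j. d j z))) \<longlonglongrightarrow> 0"
  using square_integrable_series_converges[of circ d] assms
  by (simp_all add: L2_iff_square_integrable L2_norm_eq_L2_seminorm)

definition L2_subspace :: "(complex \<Rightarrow> complex^'n::finite) set \<Rightarrow> bool" where
  "L2_subspace S \<longleftrightarrow> S \<subseteq> L2 \<and> (\<lambda>z. 0) \<in> S \<and>
     (\<forall>f\<in>S. \<forall>g\<in>S. (\<lambda>z. f z + g z) \<in> S) \<and> (\<forall>f\<in>S. \<forall>c::complex. (\<lambda>z. c *s f z) \<in> S)"

lemma closed_L2_subspace_iff:
  "closed_L2_subspace C \<longleftrightarrow> L2_subspace C \<and>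
     (\<forall>fs f. (\<forall>k. fs k \<in> C) \<longrightarrow> f \<in> L2 \<longrightarrow> (\<lambda>k. L2_norm (\<lambda>z. fs k z - f z)) \<longlonglongrightarrow> 0 \<longrightarrow> f \<in> C)"
  unfolding closed_L2_subspace_def L2_subspace_def by blast

lemma L2_subspace_L2: "L2_subspace S \<Longrightarrow> f \<in> S \<Longrightarrow> f \<in> L2"
  by (auto simp: L2_subspace_def)

lemma L2_subspace_zero: "L2_subspace S \<Longrightarrow> (\<lambda>z. 0) \<in> S"
  by (simp add: L2_subspace_def)

lemma L2_subspace_add: "L2_subspace S \<Longrightarrow> f \<in> S \<Longrightarrow> g \<in> S \<Longrightarrow> (\<lambda>z. f z + g z) \<in> S"
  by (simp add: L2_subspace_def)

lemma L2_subspace_smult: "L2_subspace S \<Longrightarrow> f \<in> S \<Longrightarrow> (\<lambda>z. c *s f z) \<in> S"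
  by (simp add: L2_subspace_def)

lemma L2_subspace_diff: "L2_subspace S \<Longrightarrow> f \<in> S \<Longrightarrow> g \<in> S \<Longrightarrow> (\<lambda>z. f z - g z) \<in> S"
  using L2_subspace_add[of S f "\<lambda>z. (-1) *s g z"] L2_subspace_smult[of S g "-1"]
  by (simp add: vector_sneg_minus1[symmetric])

lemma L2_subspace_sum:
  "L2_subspace S \<Longrightarrow> (\<And>i. i \<in> I \<Longrightarrow> f i \<in> S) \<Longrightarrow> (\<lambda>z. \<Sum>i\<in>I. f i z) \<in> S"
  by (induction I rule: infinite_finite_induct) (auto intro: L2_subspace_zero L2_subspace_add)

lemma closed_L2_subspace_imp_L2_subspace: "closed_L2_subspace C \<Longrightarrow> L2_subspace C"
  by (simp add: closed_L2_subspace_iff)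

lemma closed_L2_subspace_limit:
  "closed_L2_subspace C \<Longrightarrow> (\<And>k. fs k \<in> C) \<Longrightarrow> f \<in> L2 \<Longrightarrow>
    (\<lambda>k. L2_norm (\<lambda>z. fs k z - f z)) \<longlonglongrightarrow> 0 \<Longrightarrow> f \<in> C"
  unfolding closed_L2_subspace_def by blast

lemma closed_L2_subspace_cong_AE:
  assumes C: "closed_L2_subspace C" and "f \<in> C" "g \<in> L2" "AE z in circ. f z = g z"
  shows "g \<in> C"
proof (rule closed_L2_subspace_limit[OF C, of "\<lambda>k. f"])
  have "f \<in> L2"
    using C assms(2) by (auto intro: L2_subspace_L2 closed_L2_subspace_imp_L2_subspace)
  then have "L2_norm (\<lambda>z. f z - g z) = 0"
    using assms by (subst L2_norm_eq_0_iff) (auto intro: L2_diff)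
  then show "(\<lambda>k. L2_norm (\<lambda>z. f z - g z)) \<longlonglongrightarrow> 0"
    by simp
qed (use assms in auto)

lemma closed_L2_subspace_bounded_limit:
  assumes C: "closed_L2_subspace C" and fs: "\<And>k. fs k \<in> C" and f: "f \<in> L2"
    and lim: "\<And>z. (\<lambda>k. fs k z) \<longlonglongrightarrow> f z" and bound: "\<And>k z. norm (fs k z - f z) \<le> B"
  shows "f \<in> C"
proof (rule closed_L2_subspace_limit[OF C fs f])
  have "(\<lambda>k. L2_seminorm circ (\<lambda>z. fs k z - f z)) \<longlonglongrightarrow> 0"
  proof (rule L2_seminorm_dominated_convergence[where w="\<lambda>z. B^2"])
    show "square_integrable circ (fs k)" for k
      using fs C by (auto simp flip: L2_iff_square_integrable intro: L2_subspace_L2 closed_L2_subspace_imp_L2_subspace)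
    show "square_integrable circ f"
      using f by (simp add: L2_iff_square_integrable)
    show "AE z in circ. (norm (fs k z - f z))^2 \<le> B^2" for k
      by (intro AE_I2 power_mono bound) simp
  qed (use lim in auto)
  then show "(\<lambda>k. L2_norm (\<lambda>z. fs k z - f z)) \<longlonglongrightarrow> 0"
    by (simp add: L2_norm_eq_L2_seminorm)
qed

definition L2_closure :: "(complex \<Rightarrow> complex^'n::finite) set \<Rightarrow> (complex \<Rightarrow> complex^'n) set" where
  "L2_closure S = {g \<in> L2. \<forall>e>0. \<exists>t\<in>S. L2_norm (\<lambda>z. g z - t z) < e}"

lemma L2_closure_L2: "g \<in> L2_closure S \<Longrightarrow> g \<in> L2"
  by (simp add: L2_closure_def)

lemma L2_closureD: "g \<in> L2_closure S \<Longrightarrow> e > 0 \<Longrightarrow> \<exists>t\<in>S. L2_norm (\<lambda>z. g z - t z) < e"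
  by (simp add: L2_closure_def)

lemma subset_L2_closure: "S \<subseteq> L2 \<Longrightarrow> S \<subseteq> L2_closure S"
  by (force simp: L2_closure_def L2_norm_zero)

lemma L2_closure_add:
  assumes S: "S \<subseteq> L2" and T: "T \<subseteq> L2" and U: "\<And>s t. s \<in> S \<Longrightarrow> t \<in> T \<Longrightarrow> (\<lambda>z. s z + t z) \<in> U"
    and f: "f \<in> L2_closure S" and g: "g \<in> L2_closure T"
  shows "(\<lambda>z. f z + g z) \<in> L2_closure U"
  unfolding L2_closure_def
proof (intro CollectI conjI allI impI)
  show "(\<lambda>z. f z + g z) \<in> L2"
    using f g by (intro L2_add L2_closure_L2)
  fix e :: real assume e: "e > 0"
  obtain s t where s: "s \<in> S" "L2_norm (\<lambda>z. f z - s z) < e/2" and t: "t \<in> T" "L2_norm (\<lambda>z. g z - t z) < e/2"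
    using L2_closureD[OF f, of "e/2"] L2_closureD[OF g, of "e/2"] e by auto
  have L2: "f \<in> L2" "g \<in> L2" "s \<in> L2" "t \<in> L2"
    using f g s(1) t(1) S T by (auto intro: L2_closure_L2)
  have "L2_norm (\<lambda>z. (f z + g z) - (s z + t z)) = L2_norm (\<lambda>z. (f z - s z) + (g z - t z))"
    by (simp add: algebra_simps)
  also have "\<dots> \<le> L2_norm (\<lambda>z. f z - s z) + L2_norm (\<lambda>z. g z - t z)"
    using L2 by (intro L2_norm_triangle L2_diff)
  finally show "\<exists>u\<in>U. L2_norm (\<lambda>z. (f z + g z) - u z) < e"
    using s t U by (intro bexI[of _ "\<lambda>z. s z + t z"]) auto
qed

lemma L2_closure_smult:
  assumes T: "\<And>s. s \<in> S \<Longrightarrow> (\<lambda>z. c *s s z) \<in> T" and f: "f \<in> L2_closure S"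
  shows "(\<lambda>z. c *s f z) \<in> L2_closure T"
  unfolding L2_closure_def
proof (intro CollectI conjI allI impI)
  show "(\<lambda>z. c *s f z) \<in> L2"
    using f by (intro L2_smult L2_closure_L2)
  fix e :: real assume e: "e > 0"
  then obtain t where t: "t \<in> S" "L2_norm (\<lambda>z. f z - t z) < e / (norm c + 1)"
    using L2_closureD[OF f, of "e / (norm c + 1)"] by (auto simp: add_nonneg_pos)
  have "L2_norm (\<lambda>z. c *s f z - c *s t z) = norm c * L2_norm (\<lambda>z. f z - t z)"
    using L2_norm_smult[of c "\<lambda>z. f z - t z"] by (simp add: vector_ssub_ldistrib)
  also have "\<dots> \<le> (norm c + 1) * L2_norm (\<lambda>z. f z - t z)"
    by (intro mult_right_mono L2_norm_nonneg) simp
  also have "\<dots> < (norm c + 1) * (e / (norm c + 1))"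
    using t(2) by (intro mult_strict_left_mono) (auto simp: add_nonneg_pos)
  also have "\<dots> = e"
    using norm_ge_zero[of c] by (simp del: norm_ge_zero)
  finally show "\<exists>u\<in>T. L2_norm (\<lambda>z. c *s f z - u z) < e"
    using t T by (intro bexI[of _ "\<lambda>z. c *s t z"]) auto
qed

lemma L2_closure_limit:
  assumes S: "S \<subseteq> L2" and fs: "\<And>k. fs k \<in> L2_closure S" and f: "f \<in> L2"
    and lim: "(\<lambda>k. L2_norm (\<lambda>z. fs k z - f z)) \<longlonglongrightarrow> 0"
  shows "f \<in> L2_closure S"
  unfolding L2_closure_def
proof (intro CollectI conjI allI impI f)
  fix e :: real assume e: "e > 0"
  obtain k where "\<forall>n\<ge>k. norm (L2_norm (\<lambda>z. fs n z - f z) - 0) < e/2"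
    using LIMSEQ_D[OF lim, of "e/2"] e by auto
  then have k: "L2_norm (\<lambda>z. fs k z - f z) < e/2"
    by (simp add: L2_norm_nonneg)
  obtain t where t: "t \<in> S" "L2_norm (\<lambda>z. fs k z - t z) < e/2"
    using L2_closureD[OF fs[of k], of "e/2"] e by auto
  have "L2_norm (\<lambda>z. f z - t z) \<le> L2_norm (\<lambda>z. f z - fs k z) + L2_norm (\<lambda>z. fs k z - t z)"
    using S t f fs[of k] by (intro L2_norm_triangle_diff) (auto intro: L2_closure_L2)
  also have "\<dots> < e"
    using k t(2) by (simp add: L2_norm_minus_commute[of f])
  finally show "\<exists>t\<in>S. L2_norm (\<lambda>z. f z - t z) < e"
    using t by blast
qed

lemma closed_L2_subspace_L2_closure:
  assumes "L2_subspace S"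
  shows "closed_L2_subspace (L2_closure S)"
proof -
  have "S \<subseteq> L2"
    using assms by (auto intro: L2_subspace_L2)
  then show ?thesis
    unfolding closed_L2_subspace_def
    using subset_L2_closure[OF \<open>S \<subseteq> L2\<close>] L2_subspace_zero[OF assms]
    by (auto intro: L2_closure_L2 L2_closure_limit L2_closure_add[OF _ _ L2_subspace_add[OF assms]]
        L2_closure_smult[OF L2_subspace_smult[OF assms]])
qed

lemma scaleR_eq_vector_smult: "r *\<^sub>R x = complex_of_real r *s (x::complex^'n)"
  unfolding vec_eq_iff vector_scaleR_component vector_smult_component by (simp add: scaleR_conv_of_real)

lemma L2_indicator: "A \<in> sets borel \<Longrightarrow> (\<lambda>z. indicator A z *\<^sub>R v) \<in> L2"
  by (rule L2_bounded[where B="norm v"]) (auto simp: indicator_def)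

context
  fixes C :: "(complex \<Rightarrow> complex^'n::finite) set"
  assumes C: "closed_L2_subspace C"
    and continuous_in_C: "\<And>q. continuous_on UNIV q \<Longrightarrow> q \<in> C"
begin

private lemma subspace: "L2_subspace C"
  using C by (rule closed_L2_subspace_imp_L2_subspace)

lemma closed_L2_subspace_indicator_open:
  assumes U: "open U"
  shows "(\<lambda>z. indicator U z *\<^sub>R v) \<in> C"
proof (cases "U = UNIV")
  case True
  then show ?thesis
    using continuous_in_C[of "\<lambda>z. v"] by simp
next
  case False
  define d where "d z = infdist z (- U)" for z
  have d_pos: "d z > 0" if "z \<in> U" for z
    unfolding d_def using U False that by (intro infdist_pos_not_in_closed) auto
  define fs where "fs k z = min 1 (real k * d z) *\<^sub>R v" for k z
  show ?thesis
  proof (rule closed_L2_subspace_bounded_limit[OF C, where fs=fs and B="norm v"])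
    show "fs k \<in> C" for k
      unfolding fs_def d_def by (intro continuous_in_C continuous_intros)
    show "(\<lambda>z. indicator U z *\<^sub>R v) \<in> L2"
      using U by (intro L2_indicator) auto
    show "(\<lambda>k. fs k z) \<longlonglongrightarrow> indicator U z *\<^sub>R v" for z
    proof (cases "z \<in> U")
      case True
      obtain N :: nat where N: "1 / d z < N"
        using reals_Archimedean2 by blast
      have "fs k z = v" if "k \<ge> N" for k
      proof -
        have "1 < real N * d z"
          using N d_pos[OF True] by (simp add: field_simps)
        also have "\<dots> \<le> real k * d z"
          using that d_pos[OF True] by (intro mult_right_mono) auto
        finally have "1 \<le> real k * d z"
          by simp
        then show ?thesis by (simp add: fs_def)
      qed
      then show ?thesis
        using True by (intro tendsto_eventually) (auto simp: eventually_sequentially)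
    next
      case False
      then show ?thesis by (simp add: fs_def d_def)
    qed
    show "norm (fs k z - indicator U z *\<^sub>R v) \<le> norm v" for k z
    proof -
      have "0 \<le> min 1 (real k * d z)"
        by (simp add: d_def infdist_nonneg)
      then show ?thesis
        by (auto simp: fs_def indicator_def scaleR_diff_left[symmetric] intro: mult_left_le_one_le)
    qed
  qed
qed

lemma closed_L2_subspace_indicator_borel:
  assumes A: "A \<in> sets borel"
  shows "(\<lambda>z. indicator A z *\<^sub>R v) \<in> C"
proof -
  have "Int_stable {S::complex set. open S}"
    by (auto simp: Int_stable_def)
  moreover have "{S::complex set. open S} \<subseteq> Pow UNIV"
    by simp
  moreover have "A \<in> sigma_sets UNIV {S. open S}"
    using A by (simp add: sets_borel)
  ultimately show ?thesis
  proof (induction rule: sigma_sets_induct_disjoint)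
    case (basic A)
    then show ?case by (simp add: closed_L2_subspace_indicator_open)
  next
    case empty
    then show ?case using L2_subspace_zero[OF subspace] by simp
  next
    case (compl A)
    have "(\<lambda>z. v - indicator A z *\<^sub>R v) \<in> C"
      using compl continuous_in_C[of "\<lambda>z. v"] by (intro L2_subspace_diff[OF subspace]) auto
    moreover have "(\<lambda>z. v - indicator A z *\<^sub>R v) = (\<lambda>z. indicator (UNIV - A) z *\<^sub>R v)"
      by (auto simp: indicator_def)
    ultimately show ?case
      by simp
  next
    case (union A)
    have A_borel: "A i \<in> sets borel" for i
      using union(2) by (auto simp: sets_borel)
    show ?case
    proof (rule closed_L2_subspace_bounded_limit[OF C, where B="norm v"])
      have "(\<lambda>z. \<Sum>i<k. indicator (A i) z *\<^sub>R v) \<in> C" for k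
        using union(3) by (intro L2_subspace_sum[OF subspace])
      moreover have "(\<Sum>i<k. indicator (A i) z *\<^sub>R v) = indicator (\<Union>i<k. A i) z *\<^sub>R v" for k z
      proof -
        have "indicator (\<Union>i<k. A i) z = (\<Sum>i<k. indicator (A i) z :: real)"
          using union(1) by (intro indicator_UN_disjoint) (auto simp: disjoint_family_on_def)
        then show ?thesis
          by (simp add: scaleR_sum_left)
      qed
      ultimately show "(\<lambda>z. indicator (\<Union>i<k. A i) z *\<^sub>R v) \<in> C" for k
        by simp
      show "(\<lambda>z. indicator (\<Union>i. A i) z *\<^sub>R v) \<in> L2"
        using A_borel by (intro L2_indicator) auto
      show "(\<lambda>k. indicator (\<Union>i<k. A i) z *\<^sub>R v) \<longlonglongrightarrow> indicator (\<Union>i. A i) z *\<^sub>R v" for z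
        by (intro tendsto_scaleR LIMSEQ_indicator_UN tendsto_const)
      show "norm (indicator (\<Union>i<k. A i) z *\<^sub>R v - indicator (\<Union>i. A i) z *\<^sub>R v) \<le> norm v" for k z
        by (auto simp: indicator_def)
    qed
  qed
qed

lemma closed_L2_subspace_simple_function:
  assumes s: "simple_function circ s"
  shows "s \<in> C"
proof -
  have "s -` {y} \<in> sets borel" if "y \<in> range s" for y
    using simple_functionD(2)[OF s] that by simp
  then have "(\<lambda>z. \<Sum>y\<in>range s. indicator (s -` {y}) z *\<^sub>R y) \<in> C"
    by (intro L2_subspace_sum[OF subspace]) (rule closed_L2_subspace_indicator_borel)
  moreover have "(\<lambda>z. \<Sum>y\<in>range s. indicator (s -` {y}) z *\<^sub>R y) = s"
  proof
    fix z
    have "s z = (\<Sum>y\<in>range s. indicator (s -` {y}) z *\<^sub>R y)"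
      using simple_function_indicator_representation_banach[OF s, of z]
      unfolding space_circ Int_UNIV_right by blast
    then show "(\<Sum>y\<in>range s. indicator (s -` {y}) z *\<^sub>R y) = s z"
      by (rule sym)
  qed
  ultimately show ?thesis
    by (simp only:)
qed

theorem closed_L2_subspace_containing_continuous_eq_L2: "C = L2"
proof
  show "C \<subseteq> L2"
    using subspace by (auto intro: L2_subspace_L2)
  show "L2 \<subseteq> C"
  proof
    fix f :: "complex \<Rightarrow> complex^'n" assume f: "f \<in> L2"
    then have [measurable]: "f \<in> borel_measurable borel"
      by (rule L2_measurable)
    obtain F where F: "\<And>i. simple_function circ (F i)" "\<And>z. (\<lambda>i. F i z) \<longlonglongrightarrow> f z"
      "\<And>i z. dist (F i z) 0 \<le> 2 * dist (f z) 0"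
      using borel_measurable_implies_sequence_metric[of f circ 0] by auto
    have FC: "F i \<in> C" for i
      using F(1) by (rule closed_L2_subspace_simple_function)
    show "f \<in> C"
    proof (rule closed_L2_subspace_limit[OF C FC f])
      have "(\<lambda>i. L2_seminorm circ (\<lambda>z. F i z - f z)) \<longlonglongrightarrow> 0"
      proof (rule L2_seminorm_dominated_convergence[where w="\<lambda>z. (3 * norm (f z))^2"])
        show "square_integrable circ (F i)" for i
          using FC subspace by (auto simp flip: L2_iff_square_integrable intro: L2_subspace_L2)
        show "square_integrable circ f"
          using f by (simp add: L2_iff_square_integrable)
        show "integrable circ (\<lambda>z. (3 * norm (f z))^2)"
          using f by (simp add: L2_def power_mult_distrib)
        show "AE z in circ. (\<lambda>i. F i z) \<longlonglongrightarrow> f z"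
          using F(2) by simp
        show "AE z in circ. (norm (F i z - f z))^2 \<le> (3 * norm (f z))^2" for i
        proof (rule AE_I2, rule power_mono)
          show "norm (F i z - f z) \<le> 3 * norm (f z)" for z
            using norm_triangle_ineq4[of "F i z" "f z"] F(3)[of i z] by simp
        qed simp
      qed
      then show "(\<lambda>i. L2_norm (\<lambda>z. F i z - f z)) \<longlonglongrightarrow> 0"
        by (simp add: L2_norm_eq_L2_seminorm)
    qed
  qed
qed

end

lemma Hplus_iff: "f \<in> Hplus \<longleftrightarrow> f \<in> L2 \<and> (\<forall>m\<ge>1. (\<integral>z. z^m *s f z \<partial>circ) = 0)"
  by (auto simp: Hplus_def)

lemma Hplus_L2: "f \<in> Hplus \<Longrightarrow> f \<in> L2"
  by (simp add: Hplus_iff)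

lemma integrable_mult_power: "f \<in> L2 \<Longrightarrow> integrable circ (\<lambda>z. z^m *s f z)"
  by (intro L2_integrable L2_mult_power)

lemma Hplus_add:
  assumes f: "f \<in> Hplus" and g: "g \<in> Hplus"
  shows "(\<lambda>z. f z + g z) \<in> Hplus"
  unfolding Hplus_iff
proof (intro conjI allI impI)
  show "(\<lambda>z. f z + g z) \<in> L2"
    using f g by (intro L2_add Hplus_L2)
  fix m :: nat assume "m \<ge> 1"
  have "(\<integral>z. z^m *s (f z + g z) \<partial>circ) = (\<integral>z. z^m *s f z \<partial>circ) + (\<integral>z. z^m *s g z \<partial>circ)"
    unfolding vector_add_ldistrib using f g
    by (intro Bochner_Integration.integral_add integrable_mult_power Hplus_L2)
  also have "\<dots> = 0"
    using f g \<open>m \<ge> 1\<close> by (simp add: Hplus_iff)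
  finally show "(\<integral>z. z^m *s (f z + g z) \<partial>circ) = 0" .
qed

lemma Hplus_smult:
  assumes f: "f \<in> Hplus"
  shows "(\<lambda>z. c *s f z) \<in> Hplus"
  unfolding Hplus_iff
proof (intro conjI allI impI)
  show "(\<lambda>z. c *s f z) \<in> L2"
    using f by (intro L2_smult Hplus_L2)
  fix m :: nat assume "m \<ge> 1"
  have "(\<integral>z. z^m *s (c *s f z) \<partial>circ) = (\<integral>z. c *s (z^m *s f z) \<partial>circ)"
    by (simp add: vector_smult_assoc mult.commute)
  also have "\<dots> = c *s (\<integral>z. z^m *s f z \<partial>circ)"
    using f by (intro integral_bounded_linear[OF bounded_linear_vector_smult_right] integrable_mult_power Hplus_L2)
  also have "\<dots> = 0"
    using f \<open>m \<ge> 1\<close> by (simp add: Hplus_iff)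
  finally show "(\<integral>z. z^m *s (c *s f z) \<partial>circ) = 0" .
qed

lemma Hplus_limit:
  assumes fs: "\<And>k. fs k \<in> Hplus" and f: "f \<in> L2"
    and lim: "(\<lambda>k. L2_norm (\<lambda>z. fs k z - f z)) \<longlonglongrightarrow> 0"
  shows "f \<in> Hplus"
  unfolding Hplus_iff
proof (intro conjI allI impI f)
  fix m :: nat assume m: "m \<ge> 1"
  have bound: "norm (\<integral>z. z^m *s f z \<partial>circ) \<le> sqrt (2*pi) * L2_norm (\<lambda>z. fs k z - f z)" for k
  proof -
    have fk: "fs k \<in> L2"
      using fs by (rule Hplus_L2)
    have [measurable]: "f \<in> borel_measurable borel" "fs k \<in> borel_measurable borel"
      using f fk by (auto intro: L2_measurable)
    have "(\<integral>z. z^m *s f z \<partial>circ) = (\<integral>z. z^m *s f z \<partial>circ) - (\<integral>z. z^m *s fs k z \<partial>circ)"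
      using fs m by (simp add: Hplus_iff)
    also have "\<dots> = (\<integral>z. z^m *s (f z - fs k z) \<partial>circ)"
      using f fk by (simp add: vector_ssub_ldistrib Bochner_Integration.integral_diff integrable_mult_power)
    finally have "norm (\<integral>z. z^m *s f z \<partial>circ) \<le> (\<integral>z. norm (z^m *s (f z - fs k z)) \<partial>circ)"
      by (simp add: integral_norm_bound)
    also have "\<dots> = (\<integral>z. norm (fs k z - f z) \<partial>circ)"
    proof (rule integral_cong_AE)
      show "AE z in circ. norm (z^m *s (f z - fs k z)) = norm (fs k z - f z)"
        using AE_circ_norm_power[of m] by eventually_elim (simp only: norm_vector_smult, simp add: norm_minus_commute)
    qed measurable
    also have "\<dots> \<le> sqrt (2*pi) * L2_norm (\<lambda>z. fs k z - f z)"
      using f fk by (intro integral_norm_le_L2_norm L2_diff)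
    finally show ?thesis .
  qed
  have "(\<lambda>k. sqrt (2*pi) * L2_norm (\<lambda>z. fs k z - f z)) \<longlonglongrightarrow> sqrt (2*pi) * 0"
    by (intro tendsto_mult tendsto_const lim)
  then have "norm (\<integral>z. z^m *s f z \<partial>circ) \<le> sqrt (2*pi) * 0"
    by (rule LIMSEQ_le_const) (use bound in blast)
  then show "(\<integral>z. z^m *s f z \<partial>circ) = 0"
    by simp
qed

lemma Hplus_const: "(\<lambda>z. v) \<in> Hplus"
  unfolding Hplus_iff
proof (intro conjI allI impI)
  show "(\<lambda>z. v) \<in> L2"
    by (intro L2_continuous continuous_intros)
  fix m :: nat assume "m \<ge> 1"
  have "integrable circ (\<lambda>z. z^m)"
    using AE_circ_norm_power[of m] by (intro circ.integrable_const_bound[where B=1]) auto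
  then have "(\<integral>z. z^m *s v \<partial>circ) = (\<integral>z. z^m \<partial>circ) *s v"
    by (rule integral_bounded_linear[OF bounded_linear_vector_smult_left])
  then show "(\<integral>z. z^m *s v \<partial>circ) = 0"
    using \<open>m \<ge> 1\<close> by (simp add: integral_circ_power)
qed

lemma closed_L2_subspace_Hplus: "closed_L2_subspace Hplus"
  unfolding closed_L2_subspace_def
  using Hplus_const[of 0] by (auto intro: Hplus_L2 Hplus_add Hplus_smult Hplus_limit)

lemma Hplus_mult_power:
  assumes f: "f \<in> Hplus"
  shows "(\<lambda>z. z^k *s f z) \<in> Hplus"
  unfolding Hplus_iff
proof (intro conjI allI impI)
  show "(\<lambda>z. z^k *s f z) \<in> L2"
    using f by (intro L2_mult_power Hplus_L2)
  fix m :: nat assume "m \<ge> 1"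
  then show "(\<integral>z. z^m *s (z^k *s f z) \<partial>circ) = 0"
    using f by (simp add: Hplus_iff vector_smult_assoc power_add[symmetric])
qed

lemma Hplus_poly: "(\<lambda>z. poly p z *s v) \<in> Hplus"
proof (induction p)
  case (pCons a p)
  have "(\<lambda>z. a *s v + z^1 *s (poly p z *s v)) \<in> Hplus"
    by (intro Hplus_add Hplus_const Hplus_mult_power pCons.IH)
  then show ?case
    by (simp add: vector_sadd_rdistrib vector_smult_assoc)
qed (simp add: Hplus_const)

definition circle_Laurent :: "(complex \<Rightarrow> complex) \<Rightarrow> bool" where
  "circle_Laurent f \<longleftrightarrow> (\<exists>K p. \<forall>z. norm z = 1 \<longrightarrow> z^K * f z = poly p z)"

lemma circle_Laurent_const: "circle_Laurent (\<lambda>z. c)"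
  unfolding circle_Laurent_def by (intro exI[of _ 0] exI[of _ "[:c:]"]) simp

lemma circle_Laurent_add:
  assumes "circle_Laurent f" "circle_Laurent g"
  shows "circle_Laurent (\<lambda>z. f z + g z)"
proof -
  obtain K p L q where "\<And>z. norm z = 1 \<Longrightarrow> z^K * f z = poly p z" "\<And>z. norm z = 1 \<Longrightarrow> z^L * g z = poly q z"
    using assms unfolding circle_Laurent_def by metis
  then have "z^(K + L) * (f z + g z) = poly (monom 1 L * p + monom 1 K * q) z" if "norm z = 1" for z
    using that by (simp add: poly_monom power_add algebra_simps)
  then show ?thesis
    unfolding circle_Laurent_def by blast
qed

lemma circle_Laurent_mult:
  assumes "circle_Laurent f" "circle_Laurent g"
  shows "circle_Laurent (\<lambda>z. f z * g z)"
proof -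
  obtain K p L q where "\<And>z. norm z = 1 \<Longrightarrow> z^K * f z = poly p z" "\<And>z. norm z = 1 \<Longrightarrow> z^L * g z = poly q z"
    using assms unfolding circle_Laurent_def by metis
  then have "z^(K + L) * (f z * g z) = poly (p * q) z" if "norm z = 1" for z
    using that by (simp add: power_add algebra_simps)
  then show ?thesis
    unfolding circle_Laurent_def by blast
qed

lemma circle_Laurent_Re: "circle_Laurent (\<lambda>z. complex_of_real (Re z))"
proof -
  have "z * complex_of_real (Re z) = poly [:1/2, 0, 1/2:] z" if "norm z = 1" for z
  proof -
    have "z * cnj z = 1"
      using that complex_norm_square[of z] by simp
    then show ?thesis
      using complex_add_cnj[of z] by (simp add: algebra_simps power2_eq_square) algebra
  qed
  then show ?thesis
    unfolding circle_Laurent_def by (metis power_one_right)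
qed

lemma circle_Laurent_Im: "circle_Laurent (\<lambda>z. complex_of_real (Im z))"
proof -
  have "z * complex_of_real (Im z) = poly [:\<i>/2, 0, -\<i>/2:] z" if "norm z = 1" for z
  proof -
    define w where "w = complex_of_real (Im z)"
    have "z * cnj z = 1"
      using that complex_norm_square[of z] by simp
    moreover have "cnj z = z - 2 * \<i> * w"
      using complex_diff_cnj[of z] by (simp add: w_def algebra_simps)
    ultimately have zz: "z * z = 1 + 2 * \<i> * (z * w)"
      by (simp add: algebra_simps)
    have "poly [:\<i>/2, 0, -\<i>/2:] z = \<i>/2 - \<i>/2 * (z * z)"
      by (simp add: algebra_simps)
    also have "\<dots> = z * w"
      unfolding zz by (simp add: algebra_simps)
    finally show ?thesis
      by (simp add: w_def)
  qed
  then show ?thesis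
    unfolding circle_Laurent_def by (metis power_one_right)
qed

lemma circle_Laurent_real_polynomial_function:
  "real_polynomial_function q \<Longrightarrow> circle_Laurent (\<lambda>z. complex_of_real (q z))"
proof (induction q rule: real_polynomial_function.induct)
  case (linear f)
  have "f z = Re z * f 1 + Im z * f \<i>" for z
  proof -
    have "z = Re z *\<^sub>R 1 + Im z *\<^sub>R \<i>"
      by (simp add: complex_eq_iff)
    then have "f z = f (Re z *\<^sub>R 1 + Im z *\<^sub>R \<i>)"
      by (rule arg_cong)
    also have "\<dots> = Re z * f 1 + Im z * f \<i>"
      using linear by (simp add: linear_simps)
    finally show ?thesis .
  qed
  then have "(\<lambda>z. complex_of_real (f z)) =
      (\<lambda>z. complex_of_real (Re z) * complex_of_real (f 1) + complex_of_real (Im z) * complex_of_real (f \<i>))"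
    by (intro ext) (metis of_real_add of_real_mult)
  then show ?case
    by (simp only:) (intro circle_Laurent_add circle_Laurent_mult circle_Laurent_const circle_Laurent_Re circle_Laurent_Im)
qed (simp_all add: circle_Laurent_const circle_Laurent_add circle_Laurent_mult)

definition shifted_Hplus :: "(complex \<Rightarrow> complex^'n::finite) set" where
  "shifted_Hplus = {t \<in> L2. \<exists>K. (\<lambda>z. z^K *s t z) \<in> Hplus}"

lemma L2_subspace_shifted_Hplus: "L2_subspace (shifted_Hplus :: (complex \<Rightarrow> complex^'n::finite) set)"
  unfolding L2_subspace_def
proof (intro conjI ballI allI)
  show "shifted_Hplus \<subseteq> L2"
    by (auto simp: shifted_Hplus_def)
  show "(\<lambda>z. 0) \<in> shifted_Hplus"
    using Hplus_const[of 0] by (auto simp: shifted_Hplus_def L2_zero)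
next
  fix f g :: "complex \<Rightarrow> complex^'n" assume "f \<in> shifted_Hplus" "g \<in> shifted_Hplus"
  then obtain K L where f: "f \<in> L2" "(\<lambda>z. z^K *s f z) \<in> Hplus" and g: "g \<in> L2" "(\<lambda>z. z^L *s g z) \<in> Hplus"
    by (auto simp: shifted_Hplus_def)
  have "(\<lambda>z. z^L *s (z^K *s f z) + z^K *s (z^L *s g z)) \<in> Hplus"
    by (intro Hplus_add Hplus_mult_power f(2) g(2))
  then have "(\<lambda>z. z^(K + L) *s (f z + g z)) \<in> Hplus"
    by (simp add: vector_smult_assoc vector_add_ldistrib power_add mult.commute)
  then show "(\<lambda>z. f z + g z) \<in> shifted_Hplus"
    using f g by (auto simp: shifted_Hplus_def intro: L2_add)
next
  fix f :: "complex \<Rightarrow> complex^'n" and c assume "f \<in> shifted_Hplus"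
  then obtain K where f: "f \<in> L2" "(\<lambda>z. z^K *s f z) \<in> Hplus"
    by (auto simp: shifted_Hplus_def)
  have "(\<lambda>z. c *s (z^K *s f z)) \<in> Hplus"
    by (intro Hplus_smult f(2))
  then have "(\<lambda>z. z^K *s (c *s f z)) \<in> Hplus"
    by (simp add: vector_smult_assoc mult.commute)
  then show "(\<lambda>z. c *s f z) \<in> shifted_Hplus"
    using f by (auto simp: shifted_Hplus_def intro: L2_smult)
qed

lemma shifted_Hplus_real_polynomial_function:
  assumes q: "real_polynomial_function q"
  shows "(\<lambda>z. q z *\<^sub>R v) \<in> shifted_Hplus"
proof -
  have cont: "continuous_on UNIV q"
    using q by (intro continuous_on_polymonial_function) (simp add: real_polynomial_function_eq)
  then have [measurable]: "q \<in> borel_measurable borel"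
    by (rule borel_measurable_continuous_onI)
  obtain K p where Kp: "\<And>z. norm z = 1 \<Longrightarrow> z^K * complex_of_real (q z) = poly p z"
    using circle_Laurent_real_polynomial_function[OF q] unfolding circle_Laurent_def by blast
  have "(\<lambda>z. z^K *s (q z *\<^sub>R v)) \<in> Hplus"
  proof (rule closed_L2_subspace_cong_AE[OF closed_L2_subspace_Hplus Hplus_poly[of p v]])
    show "(\<lambda>z. z^K *s (q z *\<^sub>R v)) \<in> L2"
      using cont by (intro L2_mult_power L2_continuous continuous_intros)
    show "AE z in circ. poly p z *s v = z^K *s (q z *\<^sub>R v)"
      using AE_circ_norm by eventually_elim (simp add: Kp[symmetric] scaleR_eq_vector_smult vector_smult_assoc)
  qed
  moreover have "(\<lambda>z. q z *\<^sub>R v) \<in> L2"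
    using cont by (intro L2_continuous continuous_intros)
  ultimately show ?thesis
    by (auto simp: shifted_Hplus_def)
qed

lemma vector_smult_eq_Re_Im: "c *s x = Re c *\<^sub>R x + Im c *\<^sub>R (\<i> *s (x::complex^'n))"
proof -
  have "c *s x = (complex_of_real (Re c) + \<i> * complex_of_real (Im c)) *s x"
    by (simp only: complex_eq[symmetric])
  also have "\<dots> = Re c *\<^sub>R x + Im c *\<^sub>R (\<i> *s x)"
    by (simp only: vector_sadd_rdistrib vector_smult_assoc scaleR_eq_vector_smult mult.commute)
  finally show ?thesis .
qed

lemma shifted_Hplus_polynomial_function:
  fixes g :: "complex \<Rightarrow> complex^'n::finite"
  assumes g: "polynomial_function g"
  shows "g \<in> shifted_Hplus"
proof -
  have rpf: "real_polynomial_function (\<lambda>z. Re (g z $ i))" "real_polynomial_function (\<lambda>z. Im (g z $ i))" for i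
    using g bounded_linear_compose[OF bounded_linear_Re bounded_linear_vec_nth]
      bounded_linear_compose[OF bounded_linear_Im bounded_linear_vec_nth]
    unfolding polynomial_function_def by (auto simp: o_def)
  have "(\<lambda>z. \<Sum>i\<in>UNIV. Re (g z $ i) *\<^sub>R axis i 1 + Im (g z $ i) *\<^sub>R (\<i> *s axis i 1)) \<in> shifted_Hplus"
    by (rule L2_subspace_sum[OF L2_subspace_shifted_Hplus])
       (intro L2_subspace_add[OF L2_subspace_shifted_Hplus] shifted_Hplus_real_polynomial_function rpf)
  moreover have "(\<Sum>i\<in>UNIV. Re (g z $ i) *\<^sub>R axis i 1 + Im (g z $ i) *\<^sub>R (\<i> *s axis i 1)) = g z" for z
    by (simp only: vector_smult_eq_Re_Im[symmetric] basis_expansion)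
  ultimately show ?thesis
    by simp
qed

lemma continuous_in_L2_closure_shifted_Hplus:
  fixes q :: "complex \<Rightarrow> complex^'n::finite"
  assumes q: "continuous_on UNIV q"
  shows "q \<in> L2_closure shifted_Hplus"
  unfolding L2_closure_def
proof (intro CollectI conjI allI impI)
  show "q \<in> L2"
    using q by (rule L2_continuous)
  have [measurable]: "q \<in> borel_measurable borel"
    using q by (rule borel_measurable_continuous_onI)
  fix e :: real assume e: "e > 0"
  obtain g where g: "polynomial_function g" "\<And>z. z \<in> sphere 0 1 \<Longrightarrow> norm (q z - g z) < e/3"
    using Stone_Weierstrass_polynomial_function[of "sphere 0 1" q "e/3"] e continuous_on_subset[OF q] by auto
  have [measurable]: "g \<in> borel_measurable borel"
    using g(1) by (intro borel_measurable_continuous_onI continuous_on_polymonial_function)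
  have "AE z in circ. norm (q z - g z) \<le> e/3"
    using AE_circ_norm by eventually_elim (use g(2) in \<open>auto intro: less_imp_le\<close>)
  then have "L2_norm (\<lambda>z. q z - g z) \<le> sqrt (2*pi) * (e/3)"
  proof (rule L2_norm_le_sup[rotated])
    show "0 \<le> e/3"
      using e by simp
  qed measurable
  also have "\<dots> < e"
  proof -
    have "sqrt (2*pi) < sqrt (3^2)"
      using pi_less_4 by (subst real_sqrt_less_iff) simp
    then show ?thesis
      using e by simp
  qed
  finally show "\<exists>t\<in>shifted_Hplus. L2_norm (\<lambda>z. q z - t z) < e"
    using shifted_Hplus_polynomial_function[OF g(1)] by blast
qed

theorem L2_closure_shifted_Hplus: "L2_closure shifted_Hplus = L2"
  by (intro closed_L2_subspace_containing_continuous_eq_L2 closed_L2_subspace_L2_closure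
      L2_subspace_shifted_Hplus continuous_in_L2_closure_shifted_Hplus)

lemma L2_norm_limit_le:
  assumes fs: "\<And>k. fs k \<in> L2" and f: "f \<in> L2"
    and lim: "(\<lambda>k. L2_norm (\<lambda>z. fs k z - f z)) \<longlonglongrightarrow> 0"
    and bound: "eventually (\<lambda>k. L2_norm (fs k) \<le> B) sequentially"
  shows "L2_norm f \<le> B"
proof (rule tendsto_le[OF trivial_limit_sequentially _ tendsto_const])
  show "(\<lambda>k. B + L2_norm (\<lambda>z. fs k z - f z)) \<longlonglongrightarrow> B"
    using tendsto_add[OF tendsto_const[of B] lim] by simp
  show "eventually (\<lambda>k. L2_norm f \<le> B + L2_norm (\<lambda>z. fs k z - f z)) sequentially"
    using bound
  proof eventually_elim
    case (elim k)
    have "L2_norm f \<le> L2_norm (\<lambda>z. f z - fs k z) + L2_norm (fs k)"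
      using L2_norm_triangle_diff[OF f fs[of k] L2_zero] by simp
    then show ?case
      using elim by (simp add: L2_norm_minus_commute[of f])
  qed
qed

lemma closed_L2_subspace_series:
  assumes C: "closed_L2_subspace C" and d: "\<And>j. d j \<in> C" and summable: "summable (\<lambda>j. L2_norm (d j))"
  shows "(\<lambda>z. \<Sum>j. d j z) \<in> C" and "L2_norm (\<lambda>z. \<Sum>j. d j z) \<le> (\<Sum>j. L2_norm (d j))"
proof -
  have subspace: "L2_subspace C"
    using C by (rule closed_L2_subspace_imp_L2_subspace)
  have dL2: "d j \<in> L2" for j
    using subspace d by (rule L2_subspace_L2)
  note series = L2_series_converges[OF dL2 summable]
  have partial: "(\<lambda>z. \<Sum>j<m. d j z) \<in> C" for m
    by (rule L2_subspace_sum[OF subspace d])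
  then show "(\<lambda>z. \<Sum>j. d j z) \<in> C"
    using series by (rule closed_L2_subspace_limit[OF C])
  show "L2_norm (\<lambda>z. \<Sum>j. d j z) \<le> (\<Sum>j. L2_norm (d j))"
  proof (rule L2_norm_limit_le[OF _ series])
    show "(\<lambda>z. \<Sum>j<m. d j z) \<in> L2" for m
      by (rule L2_subspace_L2[OF subspace partial])
    have "L2_norm (\<lambda>z. \<Sum>j<m. d j z) \<le> (\<Sum>j. L2_norm (d j))" for m
    proof -
      have "L2_norm (\<lambda>z. \<Sum>j<m. d j z) \<le> (\<Sum>j<m. L2_norm (d j))"
        by (rule L2_norm_sum_le) (rule dL2)
      also have "\<dots> \<le> (\<Sum>j. L2_norm (d j))"
        by (rule sum_le_suminf[OF summable]) (auto simp: L2_norm_nonneg)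
      finally show ?thesis .
    qed
    then show "eventually (\<lambda>m. L2_norm (\<lambda>z. \<Sum>j<m. d j z) \<le> (\<Sum>j. L2_norm (d j))) sequentially"
      by simp
  qed
qed

lemma L2_summable_increments_converge:
  assumes c: "\<And>n. c n \<in> L2" and summable: "summable (\<lambda>n. L2_norm (\<lambda>z. c (Suc n) z - c n z))"
  obtains g where "g \<in> L2" "(\<lambda>m. L2_norm (\<lambda>z. c m z - g z)) \<longlonglongrightarrow> 0"
proof -
  define d where "d n z = c (Suc n) z - c n z" for n z
  have "d n \<in> L2" for n
    unfolding d_def by (intro L2_diff c)
  note series = L2_series_converges[OF this summable[folded d_def]]
  have partial: "(\<Sum>n<m. d n z) = c m z - c 0 z" for m z
    unfolding d_def by (rule sum_lessThan_telescope)
  show ?thesis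
  proof (rule that[of "\<lambda>z. c 0 z + (\<Sum>n. d n z)"])
    show "(\<lambda>z. c 0 z + (\<Sum>n. d n z)) \<in> L2"
      using series(1) by (intro L2_add c)
    show "(\<lambda>m. L2_norm (\<lambda>z. c m z - (c 0 z + (\<Sum>n. d n z)))) \<longlonglongrightarrow> 0"
      using series(2) by (simp add: partial algebra_simps)
  qed
qed

lemma L2_nested_balls:
  assumes c: "\<And>n. c n \<in> L2" and r: "\<And>n. r n \<ge> 0"
    and nested: "\<And>n. L2_norm (\<lambda>z. c (Suc n) z - c n z) \<le> r n - r (Suc n)"
  obtains g where "g \<in> L2" "\<And>n. L2_norm (\<lambda>z. g z - c n z) \<le> r n"
proof -
  have dist: "L2_norm (\<lambda>z. c m z - c n z) \<le> r n - r m" if "n \<le> m" for m n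
    using that
  proof (induction m rule: dec_induct)
    case (step m)
    have "L2_norm (\<lambda>z. c (Suc m) z - c n z) \<le> L2_norm (\<lambda>z. c (Suc m) z - c m z) + L2_norm (\<lambda>z. c m z - c n z)"
      by (intro L2_norm_triangle_diff c)
    then show ?case
      using step.IH nested[of m] by linarith
  qed (simp add: L2_norm_zero)
  have "(\<Sum>n<m. L2_norm (\<lambda>z. c (Suc n) z - c n z)) \<le> r 0" for m
  proof -
    have "(\<Sum>n<m. L2_norm (\<lambda>z. c (Suc n) z - c n z)) \<le> (\<Sum>n<m. r n - r (Suc n))"
      by (intro sum_mono nested)
    also have "\<dots> = r 0 - r m"
      by (rule sum_lessThan_telescope')
    finally show ?thesis
      using r[of m] by linarith
  qed
  then have "summable (\<lambda>n. L2_norm (\<lambda>z. c (Suc n) z - c n z))"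
    by (rule summableI_nonneg_bounded[OF L2_norm_nonneg])
  then obtain g where g: "g \<in> L2" and lim: "(\<lambda>m. L2_norm (\<lambda>z. c m z - g z)) \<longlonglongrightarrow> 0"
    by (rule L2_summable_increments_converge[OF c])
  show ?thesis
  proof (rule that[OF g])
    fix n
    show "L2_norm (\<lambda>z. g z - c n z) \<le> r n"
    proof (rule L2_norm_limit_le[where fs="\<lambda>m z. c m z - c n z"])
      show "(\<lambda>z. c m z - c n z) \<in> L2" for m
        by (intro L2_diff c)
      show "(\<lambda>z. g z - c n z) \<in> L2"
        by (intro L2_diff g c)
      show "(\<lambda>m. L2_norm (\<lambda>z. (c m z - c n z) - (g z - c n z))) \<longlonglongrightarrow> 0"
        using lim by simp
      have "L2_norm (\<lambda>z. c m z - c n z) \<le> r n" if "n \<le> m" for m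
        using dist[OF that] r[of m] by linarith
      then show "eventually (\<lambda>m. L2_norm (\<lambda>z. c m z - c n z) \<le> r n) sequentially"
        unfolding eventually_sequentially by blast
    qed
  qed
qed

lemma summable_geometric_bound:
  fixes a :: "nat \<Rightarrow> real"
  assumes nonneg: "\<And>k. 0 \<le> a k" and bound: "\<And>k. a (Suc k) \<le> B * (1/2)^k"
  shows "summable a" and "(\<Sum>k. a k) \<le> a 0 + 2 * B"
proof -
  have geometric: "summable (\<lambda>k. B * (1/2::real)^k)" "(\<Sum>k. B * (1/2::real)^k) = 2 * B"
    by (simp_all add: summable_geometric suminf_mult suminf_geometric)
  have "summable (\<lambda>k. a (Suc k))"
    by (rule summable_comparison_test'[OF geometric(1)]) (use nonneg bound in auto)
  then show sum: "summable a"
    by (simp only: summable_Suc_iff)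
  have "(\<Sum>k. a (Suc k)) \<le> 2 * B"
    unfolding geometric(2)[symmetric]
    by (rule suminf_le[OF bound]) (simp_all add: \<open>summable (\<lambda>k. a (Suc k))\<close> geometric(1))
  then show "(\<Sum>k. a k) \<le> a 0 + 2 * B"
    using suminf_split_head[OF sum] by simp
qed

definition decomposable_with_bound ::
    "(complex \<Rightarrow> complex^'n::finite) set \<Rightarrow> (complex \<Rightarrow> complex^'n) set \<Rightarrow> real \<Rightarrow> (complex \<Rightarrow> complex^'n) set" where
  "decomposable_with_bound P H b =
     {g \<in> L2. \<exists>p\<in>P. \<exists>h\<in>H. (AE z in circ. g z = p z + h z) \<and> L2_norm h \<le> b}"

lemma decomposable_with_bound_L2: "decomposable_with_bound P H b \<subseteq> L2"
  by (auto simp: decomposable_with_bound_def)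

lemma decomposable_with_bound_add:
  assumes P: "L2_subspace P" and H: "L2_subspace H"
    and f: "f \<in> decomposable_with_bound P H a" and g: "g \<in> decomposable_with_bound P H b"
  shows "(\<lambda>z. f z + g z) \<in> decomposable_with_bound P H (a + b)"
proof -
  obtain p h where p: "p \<in> P" and h: "h \<in> H" and f_eq: "AE z in circ. f z = p z + h z" and "L2_norm h \<le> a"
    using f by (auto simp: decomposable_with_bound_def)
  obtain p' h' where p': "p' \<in> P" and h': "h' \<in> H" and g_eq: "AE z in circ. g z = p' z + h' z" and "L2_norm h' \<le> b"
    using g by (auto simp: decomposable_with_bound_def)
  have "h \<in> L2" "h' \<in> L2"
    using h h' H by (auto intro: L2_subspace_L2)
  then have "L2_norm (\<lambda>z. h z + h' z) \<le> L2_norm h + L2_norm h'"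
    by (rule L2_norm_triangle)
  then have "L2_norm (\<lambda>z. h z + h' z) \<le> a + b"
    using \<open>L2_norm h \<le> a\<close> \<open>L2_norm h' \<le> b\<close> by linarith
  moreover have "AE z in circ. f z + g z = (p z + p' z) + (h z + h' z)"
    using f_eq g_eq by eventually_elim simp
  moreover have "(\<lambda>z. f z + g z) \<in> L2"
    using f g by (auto simp: decomposable_with_bound_def intro: L2_add)
  moreover have "(\<lambda>z. p z + p' z) \<in> P" "(\<lambda>z. h z + h' z) \<in> H"
    using p p' h h' P H by (auto intro: L2_subspace_add)
  ultimately show ?thesis
    unfolding decomposable_with_bound_def mem_Collect_eq by (intro conjI bexI) auto
qed

lemma decomposable_with_bound_smult:
  assumes P: "L2_subspace P" and H: "L2_subspace H" and f: "f \<in> decomposable_with_bound P H a"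
  shows "(\<lambda>z. c *s f z) \<in> decomposable_with_bound P H (norm c * a)"
proof -
  obtain p h where p: "p \<in> P" and h: "h \<in> H" and f_eq: "AE z in circ. f z = p z + h z" and "L2_norm h \<le> a"
    using f by (auto simp: decomposable_with_bound_def)
  have "L2_norm (\<lambda>z. c *s h z) \<le> norm c * a"
    using \<open>L2_norm h \<le> a\<close> by (simp add: L2_norm_smult mult_left_mono)
  moreover have "AE z in circ. c *s f z = c *s p z + c *s h z"
    using f_eq by eventually_elim (simp add: vector_add_ldistrib)
  moreover have "(\<lambda>z. c *s f z) \<in> L2"
    using f by (auto simp: decomposable_with_bound_def intro: L2_smult)
  moreover have "(\<lambda>z. c *s p z) \<in> P" "(\<lambda>z. c *s h z) \<in> H"
    using p h P H by (auto intro: L2_subspace_smult)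
  ultimately show ?thesis
    unfolding decomposable_with_bound_def mem_Collect_eq by (intro conjI bexI) auto
qed

lemma L2_closure_decomposable_with_boundD:
  assumes P: "L2_subspace P" and H: "L2_subspace H"
    and g: "g \<in> L2_closure (decomposable_with_bound P H b)" and \<epsilon>: "\<epsilon> > 0"
  shows "\<exists>p\<in>P. \<exists>h\<in>H. L2_norm h \<le> b \<and> L2_norm (\<lambda>z. g z - (p z + h z)) < \<epsilon>"
proof -
  obtain e where e: "e \<in> decomposable_with_bound P H b" "L2_norm (\<lambda>z. g z - e z) < \<epsilon>"
    using L2_closureD[OF g \<epsilon>] by blast
  then obtain p h where ph: "p \<in> P" "h \<in> H" "AE z in circ. e z = p z + h z" "L2_norm h \<le> b"
    by (auto simp: decomposable_with_bound_def)
  have "L2_norm (\<lambda>z. g z - (p z + h z)) = L2_norm (\<lambda>z. g z - e z)"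
  proof (rule L2_norm_cong_AE)
    show "AE z in circ. g z - (p z + h z) = g z - e z"
      using ph(3) by eventually_elim simp
    have "p \<in> L2" "h \<in> L2" "e \<in> L2" "g \<in> L2"
      using ph P H e(1) g by (auto simp: decomposable_with_bound_def intro: L2_subspace_L2 L2_closure_L2)
    then show "(\<lambda>z. g z - (p z + h z)) \<in> L2" "(\<lambda>z. g z - e z) \<in> L2"
      by (auto intro: L2_diff L2_add)
  qed
  then have "L2_norm h \<le> b \<and> L2_norm (\<lambda>z. g z - (p z + h z)) < \<epsilon>"
    using ph(4) e(2) by simp
  then show ?thesis
    using ph(1,2) by blast
qed

lemma L2_closure_decomposable_with_bound_rescale:
  assumes P: "L2_subspace P" and H: "L2_subspace H" and c: "c \<in> L2" and r: "r > 0"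
    and ball: "\<And>g. g \<in> L2 \<Longrightarrow> L2_norm (\<lambda>z. g z - c z) < r \<Longrightarrow> g \<in> L2_closure (decomposable_with_bound P H b)"
    and g: "g \<in> L2"
  shows "g \<in> L2_closure (decomposable_with_bound P H (4 * b / r * L2_norm g))"
proof (cases "L2_norm g = 0")
  case True
  then have "AE z in circ. g z = 0 + 0"
    using L2_norm_eq_0_iff[OF g] by simp
  then have "g \<in> decomposable_with_bound P H 0"
    using g L2_subspace_zero[OF P] L2_subspace_zero[OF H]
    unfolding decomposable_with_bound_def mem_Collect_eq by (intro conjI bexI) (auto simp: L2_norm_zero)
  then show ?thesis
    using True subset_L2_closure[OF decomposable_with_bound_L2] by auto
next
  case False
  then have g_pos: "L2_norm g > 0"
    using L2_norm_nonneg[of g] by linarith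
  define s where "s = r / (2 * L2_norm g)"
  have s: "s > 0"
    using g_pos r by (simp add: s_def)
  have "L2_norm (\<lambda>z. (c z + complex_of_real s *s g z) - c z) = s * L2_norm g"
    using s by (simp add: L2_norm_smult)
  also have "\<dots> = r/2"
    using g_pos by (simp add: s_def)
  finally have "L2_norm (\<lambda>z. (c z + complex_of_real s *s g z) - c z) = r/2" .
  then have near: "(\<lambda>z. c z + complex_of_real s *s g z) \<in> L2_closure (decomposable_with_bound P H b)"
    using r c g by (intro ball L2_add L2_smult) auto
  have "c \<in> L2_closure (decomposable_with_bound P H b)"
    using r by (intro ball c) (simp add: L2_norm_zero)
  then have "(\<lambda>z. (-1) *s c z) \<in> L2_closure (decomposable_with_bound P H (norm (-1::complex) * b))"
    by (rule L2_closure_smult[rotated]) (rule decomposable_with_bound_smult[OF P H])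
  with near have "(\<lambda>z. (c z + complex_of_real s *s g z) + (-1) *s c z)
      \<in> L2_closure (decomposable_with_bound P H (b + norm (-1::complex) * b))"
    by (rule L2_closure_add[OF decomposable_with_bound_L2 decomposable_with_bound_L2, rotated])
       (rule decomposable_with_bound_add[OF P H])
  then have "(\<lambda>z. complex_of_real (1/s) *s ((c z + complex_of_real s *s g z) + (-1) *s c z))
      \<in> L2_closure (decomposable_with_bound P H (norm (complex_of_real (1/s)) * (b + norm (-1::complex) * b)))"
    by (rule L2_closure_smult[rotated]) (rule decomposable_with_bound_smult[OF P H])
  moreover have "(\<lambda>z. complex_of_real (1/s) *s ((c z + complex_of_real s *s g z) + (-1) *s c z)) = g"
    using s by (auto simp: vec_eq_iff field_simps)
  moreover have "norm (complex_of_real (1/s)) = 1/s"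
    unfolding norm_of_real using s by simp
  then have "norm (complex_of_real (1/s)) * (b + norm (-1::complex) * b) = 4 * b / r * L2_norm g"
    using g_pos r by (simp add: s_def field_simps)
  ultimately show ?thesis
    by simp
qed

context
  fixes P H :: "(complex \<Rightarrow> complex^'n::finite) set"
  assumes P: "closed_L2_subspace P" and H: "closed_L2_subspace H"
    and sum: "\<forall>f\<in>L2. \<exists>p\<in>P. \<exists>h\<in>H. AE z in circ. f z = p z + h z"
    and direct: "\<forall>f\<in>P \<inter> H. AE z in circ. f z = 0"
begin

private lemma subspaces: "L2_subspace P" "L2_subspace H"
  using P H by (auto intro: closed_L2_subspace_imp_L2_subspace)

lemma decomposition_unique:
  assumes "p \<in> P" "h \<in> H" "p' \<in> P" "h' \<in> H" and eq: "AE z in circ. p z + h z = p' z + h' z"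
  shows "AE z in circ. h z = h' z"
proof -
  have "(\<lambda>z. h z - h' z) \<in> H"
    using assms by (intro L2_subspace_diff[OF subspaces(2)])
  moreover have "(\<lambda>z. h z - h' z) \<in> P"
  proof (rule closed_L2_subspace_cong_AE[OF P])
    show "(\<lambda>z. p' z - p z) \<in> P"
      using assms by (intro L2_subspace_diff[OF subspaces(1)])
    show "(\<lambda>z. h z - h' z) \<in> L2"
      using subspaces(2) calculation by (rule L2_subspace_L2)
    show "AE z in circ. p' z - p z = h z - h' z"
      using eq by eventually_elim (simp add: algebra_simps)
  qed
  ultimately have "AE z in circ. h z - h' z = 0"
    using bspec[OF direct, of "\<lambda>z. h z - h' z"] by simp
  then show ?thesis
    by eventually_elim simp
qed

lemma decomposable_with_bound_dense_in_ball:
  "\<exists>n::nat. \<exists>c\<in>L2. \<exists>r>0. \<forall>g\<in>L2.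
     L2_norm (\<lambda>z. g z - c z) < r \<longrightarrow> g \<in> L2_closure (decomposable_with_bound P H (real n))"
proof (rule ccontr)
  assume no_ball: "\<not> ?thesis"
  define E where "E n = decomposable_with_bound P H (real n)" for n
  define shrinks where "shrinks n cr cr' \<longleftrightarrow>
      L2_norm (\<lambda>z. fst cr' z - fst cr z) \<le> snd cr - snd cr' \<and>
      (\<forall>x\<in>L2. L2_norm (\<lambda>z. x z - fst cr' z) \<le> snd cr' \<longrightarrow> x \<notin> E n)"
    for n and cr cr' :: "(complex \<Rightarrow> complex^'n) \<times> real"
  have shrink: "\<exists>cr'. (fst cr' \<in> L2 \<and> snd cr' > 0) \<and> shrinks n cr cr'"
    if cr: "fst cr \<in> L2 \<and> snd cr > 0" for n cr
  proof -
    obtain g where g: "g \<in> L2" "L2_norm (\<lambda>z. g z - fst cr z) < snd cr" "g \<notin> L2_closure (E n)"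
      using no_ball cr unfolding E_def by blast
    then obtain \<epsilon> where \<epsilon>: "\<epsilon> > 0" "\<And>e. e \<in> E n \<Longrightarrow> \<epsilon> \<le> L2_norm (\<lambda>z. g z - e z)"
      by (auto simp: L2_closure_def not_less)
    define r' where "r' = min (\<epsilon>/2) ((snd cr - L2_norm (\<lambda>z. g z - fst cr z)) / 2)"
    have "r' > 0" and r'_le: "r' \<le> (snd cr - L2_norm (\<lambda>z. g z - fst cr z)) / 2"
      using g(2) \<epsilon>(1) unfolding r'_def by (auto simp: min_def)
    moreover have "L2_norm (\<lambda>z. g z - fst cr z) \<le> snd cr - r'"
      using r'_le g(2) by (simp add: field_simps)
    moreover have "x \<notin> E n" if "L2_norm (\<lambda>z. x z - g z) \<le> r'" for x
      using \<epsilon> that L2_norm_minus_commute[of x g] by (force simp: r'_def)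
    ultimately show ?thesis
      using g(1) unfolding shrinks_def by (intro exI[of _ "(g, r')"]) auto
  qed
  have "\<exists>cr. \<forall>n. (fst (cr n) \<in> L2 \<and> snd (cr n) > 0) \<and> shrinks n (cr n) (cr (Suc n))"
  proof (rule dependent_nat_choice)
    show "\<exists>cr. fst cr \<in> L2 \<and> snd cr > (0::real)"
      using L2_zero by (intro exI[of _ "(\<lambda>z. 0, 1)"]) auto
  qed (rule shrink)
  then obtain cr where cr: "\<And>n. fst (cr n) \<in> L2" "\<And>n. snd (cr n) > 0"
    and shrinks: "\<And>n. shrinks n (cr n) (cr (Suc n))"
    by blast
  obtain g where g: "g \<in> L2" "\<And>n. L2_norm (\<lambda>z. g z - fst (cr n) z) \<le> snd (cr n)"
  proof (rule L2_nested_balls[where c="\<lambda>n. fst (cr n)" and r="\<lambda>n. snd (cr n)"])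
    show "snd (cr n) \<ge> 0" for n
      using cr(2)[of n] by simp
  qed (use cr shrinks in \<open>auto simp: shrinks_def\<close>)
  have "g \<notin> E n" for n
    using shrinks[of n] g by (auto simp: shrinks_def)
  moreover obtain p h where "p \<in> P" "h \<in> H" "AE z in circ. g z = p z + h z"
    using sum g(1) by blast
  then have "g \<in> E (nat \<lceil>L2_norm h\<rceil>)"
    using g(1) real_nat_ceiling_ge[of "L2_norm h"] unfolding E_def decomposable_with_bound_def by blast
  ultimately show False
    by blast
qed

lemma approximate_decomposition:
  obtains M where "M \<ge> 0"
    and "\<And>g \<epsilon>. g \<in> L2 \<Longrightarrow> \<epsilon> > 0 \<Longrightarrow>
      \<exists>p\<in>P. \<exists>h\<in>H. L2_norm h \<le> M * L2_norm g \<and> L2_norm (\<lambda>z. g z - (p z + h z)) < \<epsilon>"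
proof -
  obtain n :: nat and c r where c: "c \<in> L2" and r: "r > 0" and ball:
    "\<And>g. g \<in> L2 \<Longrightarrow> L2_norm (\<lambda>z. g z - c z) < r \<Longrightarrow> g \<in> L2_closure (decomposable_with_bound P H n)"
    using decomposable_with_bound_dense_in_ball by blast
  show ?thesis
  proof (rule that[of "4 * real n / r"])
    show "4 * real n / r \<ge> 0"
      using r by simp
    show "\<exists>p\<in>P. \<exists>h\<in>H. L2_norm h \<le> 4 * real n / r * L2_norm g \<and> L2_norm (\<lambda>z. g z - (p z + h z)) < \<epsilon>"
      if "g \<in> L2" "\<epsilon> > 0" for g \<epsilon>
      using that by (intro L2_closure_decomposable_with_boundD subspaces
          L2_closure_decomposable_with_bound_rescale[OF subspaces c r ball])
  qed
qed

lemma iterated_decomposition: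
  assumes approx: "\<And>g \<epsilon>. g \<in> L2 \<Longrightarrow> \<epsilon> > 0 \<Longrightarrow>
      \<exists>p\<in>P. \<exists>h\<in>H. L2_norm h \<le> M * L2_norm g \<and> L2_norm (\<lambda>z. g z - (p z + h z)) < \<epsilon>"
    and g: "g \<in> L2" and \<eta>: "\<eta> > 0"
  obtains gs ps hs where "gs 0 = g" "\<And>k. gs (Suc k) = (\<lambda>z. gs k z - (ps k z + hs k z))"
    "\<And>k. gs k \<in> L2" "\<And>k. ps k \<in> P" "\<And>k. hs k \<in> H" "\<And>k. L2_norm (hs k) \<le> M * L2_norm (gs k)"
    "\<And>k. L2_norm (gs (Suc k)) < \<eta> * (1/2)^k"
proof -
  define residual where "residual x = (\<lambda>z. fst x z - (fst (snd x) z + snd (snd x) z))"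
    for x :: "(complex \<Rightarrow> complex^'n) \<times> (complex \<Rightarrow> complex^'n) \<times> (complex \<Rightarrow> complex^'n)"
  define good where "good n x \<longleftrightarrow> fst x \<in> L2 \<and> fst (snd x) \<in> P \<and> snd (snd x) \<in> H \<and>
      L2_norm (snd (snd x)) \<le> M * L2_norm (fst x) \<and> L2_norm (residual x) < \<eta> * (1/2)^n" for n x
  have approx': "\<exists>x. good n x \<and> fst x = f" if f: "f \<in> L2" for n f
  proof -
    obtain p h where "p \<in> P" "h \<in> H" "L2_norm h \<le> M * L2_norm f" "L2_norm (\<lambda>z. f z - (p z + h z)) < \<eta> * (1/2)^n"
      using approx[OF f, of "\<eta> * (1/2)^n"] \<eta> by auto
    then show ?thesis
      using f by (intro exI[of _ "(f, p, h)"]) (simp add: good_def residual_def)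
  qed
  have "\<exists>X. \<forall>n. (good n (X n) \<and> (n = 0 \<longrightarrow> fst (X n) = g)) \<and> fst (X (Suc n)) = residual (X n)"
  proof (rule dependent_nat_choice)
    show "\<exists>x. good 0 x \<and> (0 = (0::nat) \<longrightarrow> fst x = g)"
      using approx'[OF g] by simp
  next
    fix x n assume "good n x \<and> (n = 0 \<longrightarrow> fst x = g)"
    then have "residual x \<in> L2"
      using subspaces unfolding good_def residual_def by (auto intro!: L2_diff L2_add intro: L2_subspace_L2)
    then show "\<exists>y. (good (Suc n) y \<and> (Suc n = 0 \<longrightarrow> fst y = g)) \<and> fst y = residual x"
      using approx' by simp
  qed
  then obtain X where X: "\<And>n. good n (X n)" "fst (X 0) = g" "\<And>n. fst (X (Suc n)) = residual (X n)"
    by blast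
  show ?thesis
  proof (rule that[where gs="\<lambda>k. fst (X k)" and ps="\<lambda>k. fst (snd (X k))" and hs="\<lambda>k. snd (snd (X k))"])
    show "L2_norm (fst (X (Suc k))) < \<eta> * (1/2)^k" for k
      using X(1)[of k] X(3)[of k] by (simp add: good_def)
  qed (use X in \<open>auto simp: good_def residual_def\<close>)
qed

lemma telescoping_decomposition:
  assumes gs0: "gs 0 = g" and gsS: "\<And>k. gs (Suc k) = (\<lambda>z. gs k z - (ps k z + hs k z))"
    and gs: "\<And>k. gs k \<in> L2" and ps: "\<And>k. ps k \<in> P" and hs: "\<And>k. hs k \<in> H"
    and hs_summable: "summable (\<lambda>k. L2_norm (hs k))" and gs_lim: "(\<lambda>m. L2_norm (gs m)) \<longlonglongrightarrow> 0"
  shows "(\<lambda>z. g z - (\<Sum>k. hs k z)) \<in> P"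
proof -
  define h_lim where "h_lim z = (\<Sum>k. hs k z)" for z
  have hsL2: "hs k \<in> L2" for k
    using subspaces(2) hs by (rule L2_subspace_L2)
  have h_lim_L2: "h_lim \<in> L2"
    unfolding h_lim_def using L2_series_converges(1)[OF hsL2 hs_summable] .
  have hs_lim: "(\<lambda>m. L2_norm (\<lambda>z. (\<Sum>k<m. hs k z) - h_lim z)) \<longlonglongrightarrow> 0"
    unfolding h_lim_def using L2_series_converges(2)[OF hsL2 hs_summable] .
  have partial: "gs m z = g z - ((\<Sum>k<m. ps k z) + (\<Sum>k<m. hs k z))" for m z
    by (induction m) (simp_all add: gs0 gsS algebra_simps)
  have partial_P: "(\<lambda>z. \<Sum>k<m. ps k z) \<in> P" for m
    by (rule L2_subspace_sum[OF subspaces(1) ps])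
  moreover have "(\<lambda>z. g z - h_lim z) \<in> L2"
    using gs[of 0] h_lim_L2 by (simp add: gs0 L2_diff)
  moreover have "(\<lambda>m. L2_norm (\<lambda>z. (\<Sum>k<m. ps k z) - (g z - h_lim z))) \<longlonglongrightarrow> 0"
  proof (rule tendsto_sandwich[where f="\<lambda>_. 0"])
    have "L2_norm (\<lambda>z. (\<Sum>k<m. ps k z) - (g z - h_lim z))
        \<le> L2_norm (\<lambda>z. (\<Sum>k<m. hs k z) - h_lim z) + L2_norm (gs m)" for m
    proof -
      have "(\<lambda>z. (\<Sum>k<m. ps k z) - (g z - h_lim z)) = (\<lambda>z. (h_lim z - (\<Sum>k<m. hs k z)) - gs m z)"
        by (simp add: partial algebra_simps)
      moreover have "(\<lambda>z. h_lim z - (\<Sum>k<m. hs k z)) \<in> L2"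
        by (intro L2_diff h_lim_L2 L2_subspace_L2[OF subspaces(2) L2_subspace_sum[OF subspaces(2) hs]])
      then have "L2_norm (\<lambda>z. (h_lim z - (\<Sum>k<m. hs k z)) - gs m z)
          \<le> L2_norm (\<lambda>z. h_lim z - (\<Sum>k<m. hs k z)) + L2_norm (gs m)"
        by (rule L2_norm_diff_le[OF _ gs])
      ultimately show ?thesis
        by (simp only: L2_norm_minus_commute[of h_lim])
    qed
    then show "eventually (\<lambda>m. L2_norm (\<lambda>z. (\<Sum>k<m. ps k z) - (g z - h_lim z))
        \<le> L2_norm (\<lambda>z. (\<Sum>k<m. hs k z) - h_lim z) + L2_norm (gs m)) sequentially"
      by simp
    show "(\<lambda>m. L2_norm (\<lambda>z. (\<Sum>k<m. hs k z) - h_lim z) + L2_norm (gs m)) \<longlonglongrightarrow> 0"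
      using tendsto_add[OF hs_lim gs_lim] by simp
  qed (simp_all add: L2_norm_nonneg)
  ultimately show ?thesis
    unfolding h_lim_def[symmetric] by (rule closed_L2_subspace_limit[OF P])
qed

lemma decomposition_bound:
  obtains C where "C \<ge> 0" and "\<And>p h. p \<in> P \<Longrightarrow> h \<in> H \<Longrightarrow> L2_norm h \<le> C * L2_norm (\<lambda>z. p z + h z)"
proof -
  obtain M where M: "M \<ge> 0" and approx: "\<And>g \<epsilon>. g \<in> L2 \<Longrightarrow> \<epsilon> > 0 \<Longrightarrow>
      \<exists>p\<in>P. \<exists>h\<in>H. L2_norm h \<le> M * L2_norm g \<and> L2_norm (\<lambda>z. g z - (p z + h z)) < \<epsilon>"
    using approximate_decomposition by blast
  have "L2_norm h0 \<le> M * L2_norm (\<lambda>z. p0 z + h0 z)" if p0: "p0 \<in> P" and h0: "h0 \<in> H" for p0 h0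
  proof (rule field_le_epsilon)
    fix \<delta> :: real assume \<delta>: "\<delta> > 0"
    define g where "g z = p0 z + h0 z" for z
    have gL2: "g \<in> L2"
      unfolding g_def using p0 h0 subspaces by (intro L2_add) (auto intro: L2_subspace_L2)
    define \<eta> where "\<eta> = \<delta> / (2 * M + 1)"
    have \<eta>: "\<eta> > 0" "2 * M * \<eta> \<le> \<delta>"
      using \<delta> M by (simp_all add: \<eta>_def field_simps)
    obtain gs ps hs where gs0: "gs 0 = g" and gsS: "\<And>k. gs (Suc k) = (\<lambda>z. gs k z - (ps k z + hs k z))"
      and gs: "\<And>k. gs k \<in> L2" and ps: "\<And>k. ps k \<in> P" and hs: "\<And>k. hs k \<in> H"
      and hs_le: "\<And>k. L2_norm (hs k) \<le> M * L2_norm (gs k)"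
      and gs_small: "\<And>k. L2_norm (gs (Suc k)) < \<eta> * (1/2)^k"
      using iterated_decomposition[OF approx gL2 \<eta>(1)] by blast
    have "L2_norm (hs (Suc k)) \<le> M * \<eta> * (1/2)^k" for k
      using hs_le[of "Suc k"] mult_left_mono[OF less_imp_le[OF gs_small[of k]] M] by simp
    note hs_summable = summable_geometric_bound[OF L2_norm_nonneg this]
    define h_lim where "h_lim z = (\<Sum>k. hs k z)" for z
    have h_lim: "h_lim \<in> H" "L2_norm h_lim \<le> (\<Sum>k. L2_norm (hs k))"
      unfolding h_lim_def[abs_def] using closed_L2_subspace_series[OF H hs hs_summable(1)] by auto
    have "summable (\<lambda>m. L2_norm (gs m))"
      using summable_geometric_bound(1)[OF L2_norm_nonneg less_imp_le[OF gs_small]] .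
    then have "(\<lambda>m. L2_norm (gs m)) \<longlonglongrightarrow> 0"
      by (rule summable_LIMSEQ_zero)
    then have "(\<lambda>z. g z - h_lim z) \<in> P"
      unfolding h_lim_def by (rule telescoping_decomposition[OF gs0 gsS gs ps hs hs_summable(1)])
    moreover have "AE z in circ. p0 z + h0 z = (g z - h_lim z) + h_lim z"
      by (simp add: g_def)
    ultimately have "AE z in circ. h0 z = h_lim z"
      by (rule decomposition_unique[OF p0 h0 _ h_lim(1)])
    then have "L2_norm h0 = L2_norm h_lim"
      using h0 h_lim(1) subspaces by (intro L2_norm_cong_AE) (auto intro: L2_subspace_L2)
    also have "\<dots> \<le> L2_norm (hs 0) + 2 * (M * \<eta>)"
      using h_lim(2) hs_summable(2) by linarith
    also have "\<dots> \<le> M * L2_norm g + \<delta>"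
      using hs_le[of 0] \<eta>(2) by (simp add: gs0)
    finally show "L2_norm h0 \<le> M * L2_norm (\<lambda>z. p0 z + h0 z) + \<delta>"
      by (simp add: g_def[abs_def])
  qed
  then show ?thesis
    using that M by blast
qed

end

lemma L2_norm_le_dist_shifted_Hplus:
  assumes P: "closed_L2_subspace P"
    and bound: "\<And>p h. p \<in> P \<Longrightarrow> h \<in> Hplus \<Longrightarrow> L2_norm h \<le> C * L2_norm (\<lambda>z. p z + h z)"
    and f: "f \<in> L2" and shifts: "\<And>n. (\<lambda>z. z^n *s f z) \<in> P" and t: "t \<in> shifted_Hplus"
  shows "L2_norm f \<le> (1 + C) * L2_norm (\<lambda>z. f z - t z)"
proof -
  obtain K where h: "(\<lambda>z. z^K *s t z) \<in> Hplus" and tL2: "t \<in> L2"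
    using t by (auto simp: shifted_Hplus_def)
  have [measurable]: "f \<in> borel_measurable borel" "t \<in> borel_measurable borel"
    using f tL2 by (auto intro: L2_measurable)
  define p where "p z = z^K *s f z" for z
  define h where "h z = z^K *s t z" for z
  have pL2: "p \<in> L2"
    unfolding p_def using f by (rule L2_mult_power)
  have hL2: "h \<in> L2"
    unfolding h_def using tL2 by (rule L2_mult_power)
  have "(\<lambda>z. (-1) *s p z) \<in> P"
    unfolding p_def using P shifts by (intro L2_subspace_smult closed_L2_subspace_imp_L2_subspace)
  then have "L2_norm h \<le> C * L2_norm (\<lambda>z. (-1) *s p z + h z)"
    using h by (intro bound) (simp_all add: h_def[abs_def])
  also have "L2_norm (\<lambda>z. (-1) *s p z + h z) = L2_norm (\<lambda>z. f z - t z)"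
    using L2_norm_mult_unimodular[OF AE_circ_norm_power[of K], of "\<lambda>z. t z - f z"]
    by (simp add: p_def h_def vector_ssub_ldistrib L2_norm_minus_commute[of t])
  finally have h_le: "L2_norm h \<le> C * L2_norm (\<lambda>z. f z - t z)" .
  have "L2_norm f = L2_norm p"
    unfolding p_def by (rule L2_norm_mult_unimodular[OF AE_circ_norm_power, symmetric]) simp_all
  also have "\<dots> \<le> L2_norm (\<lambda>z. p z - h z) + L2_norm h"
    using L2_norm_triangle_diff[OF pL2 hL2 L2_zero] by simp
  also have "L2_norm (\<lambda>z. p z - h z) = L2_norm (\<lambda>z. f z - t z)"
    using L2_norm_mult_unimodular[OF AE_circ_norm_power[of K], of "\<lambda>z. f z - t z"]
    by (simp add: p_def h_def vector_ssub_ldistrib)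
  finally show ?thesis
    using h_le by (simp add: algebra_simps)
qed

theorem lemmaA2:
  fixes P :: "(complex \<Rightarrow> complex^'n::finite) set"
  assumes closedP: "closed_L2_subspace P"
    and shift: "\<forall>f\<in>P. (\<lambda>z. inverse z *s f z) \<in> P"
    and sum: "\<forall>f\<in>L2. \<exists>p\<in>P. \<exists>h\<in>Hplus. AE z in circ. f z = p z + h z"
    and direct: "\<forall>f\<in>P \<inter> Hplus. AE z in circ. f z = 0"
  shows "\<forall>f\<in>L2. (\<forall>n::nat. (\<lambda>z. z^n *s f z) \<in> P) \<longrightarrow> (AE z in circ. f z = 0)"
proof (intro ballI impI)
  fix f :: "complex \<Rightarrow> complex^'n" assume f: "f \<in> L2" and shifts: "\<forall>n. (\<lambda>z. z^n *s f z) \<in> P"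
  obtain C where C: "C \<ge> 0" "\<And>p h. p \<in> P \<Longrightarrow> h \<in> Hplus \<Longrightarrow> L2_norm h \<le> C * L2_norm (\<lambda>z. p z + h z)"
    using decomposition_bound[OF closedP closed_L2_subspace_Hplus sum direct] by blast
  have "L2_norm f \<le> 0 + e" if e: "e > 0" for e
  proof -
    obtain t where t: "t \<in> shifted_Hplus" "L2_norm (\<lambda>z. f z - t z) < e / (1 + C)"
      using L2_closureD[of f shifted_Hplus "e / (1 + C)"] f e C(1) by (auto simp: L2_closure_shifted_Hplus)
    have "L2_norm f \<le> (1 + C) * L2_norm (\<lambda>z. f z - t z)"
      using L2_norm_le_dist_shifted_Hplus[OF closedP C(2) f _ t(1)] shifts by blast
    also have "\<dots> \<le> e"
      using t(2) C(1) by (simp add: field_simps)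
    finally show ?thesis by simp
  qed
  then have "L2_norm f \<le> 0"
    by (rule field_le_epsilon)
  then have "L2_norm f = 0"
    using L2_norm_nonneg[of f] by linarith
  then show "AE z in circ. f z = 0"
    using L2_norm_eq_0_iff[OF f] by simp
qed

end
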